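(* Let $(k,q)$ be a semiprimitive pair with $q=p^m$, $m$ even, and put $n=\frac{q-1}{k}$. Let $\sigma$ be as defined in the context. Then $$\mathrm{Spec}(\Gamma(k,q))=\{[n]^1,[\lambda_1]^n,[\lambda_2]^{(k-1)n}\},\qquad \mathrm{Spec}(\bar\Gamma(k,q))=\{[(k-1)n]^1,[(k-1)\lambda_2]^n,[-1-\lambda_2]^{(k-1)n}\},$$ where $$\lambda_1=\frac{\sigma(k-1)p^{m/2}-1}{k},\qquad \lambda_2=-\frac{\sigma p^{m/2}+1}{k},$$ and the three values $n,\lambda_1,\lambda_2$ are pairwise distinct.
   Context: Let $p$ be prime, $q=p^m$, $k\mid q-1$, $R_k=\{x^k:x\in\mathbb F_q^*\}$. The generalized Paley graph $\Gamma(k,q)$ is the Cayley graph with vertex set $\mathbb F_q$ where $u\to v$ is an edge iff $v-u\in R_k$; $\bar\Gamma(k,q)$ is the Cayley graph on $\mathbb F_q$ with connection set $\mathbb F_q^*\setminus R_k$. Spectrum = multiset of adjacency eigenvalues, written $\{[\lambda]^{\text{mult}}\}$. A pair $(k,q)$ with $q=p^m$ and $k\mid q-1$ is called a semiprimitive pair if either $k=2$ and $q\equiv1\pmod 4$, or $k>2$, $k\mid p^t+1$ for some $t\mid\frac m2$, and $k\neq p^{m/2}+1$. For a semiprimitive pair with $m$ even, let $t$ be the least positive integer $j$ with $k\mid p^j+1$, put $s=\frac{m}{2t}$, and $\sigma=(-1)^{s+1}$. *)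

theory Defs
  imports "HOL-Analysis.Analysis" "HOL-Computational_Algebra.Polynomial"
begin

definition kth_powers :: "nat \<Rightarrow> 'a::field set" where
  "kth_powers k = {x ^ k | x. x \<noteq> 0}"

text \<open>Adjacency matrix of the generalized Paley graph Gamma(k,q): Cayley (di)graph
  on the finite field with connection set R_k; u -> v iff v - u in R_k.\<close>
definition paley_adj :: "nat \<Rightarrow> ((complex, 'a::{finite,field}) vec, 'a) vec" where
  "paley_adj k = (\<chi> u v. if v - u \<in> kth_powers k then 1 else 0)"

definition paley_comp_adj :: "nat \<Rightarrow> ((complex, 'a::{finite,field}) vec, 'a) vec" where
  "paley_comp_adj k = (\<chi> u v. if v - u \<noteq> 0 \<and> v - u \<notin> kth_powers k then 1 else 0)"

definition char_poly_mat :: "complex ^ 'n::finite ^ 'n \<Rightarrow> complex poly" where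
  "char_poly_mat A = det (\<chi> i. \<chi> j. (if i = j then [:0, 1:] else 0) - [:A $ i $ j:])"

definition adj_spectrum :: "complex ^ 'n::finite ^ 'n \<Rightarrow> complex multiset" where
  "adj_spectrum A = proots (char_poly_mat A)"

definition semiprimitive_pair :: "nat \<Rightarrow> nat \<Rightarrow> nat \<Rightarrow> bool" where
  "semiprimitive_pair p m k \<longleftrightarrow>
     k dvd p ^ m - 1 \<and>
     ((k = 2 \<and> p ^ m mod 4 = 1) \<or>
      (k > 2 \<and> even m \<and> (\<exists>t. t dvd m div 2 \<and> k dvd p ^ t + 1) \<and> k \<noteq> p ^ (m div 2) + 1))"

definition sp_t :: "nat \<Rightarrow> nat \<Rightarrow> nat" where
  "sp_t p k = (LEAST j. 0 < j \<and> k dvd p ^ j + 1)"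

definition sp_sigma :: "nat \<Rightarrow> nat \<Rightarrow> nat \<Rightarrow> int" where
  "sp_sigma p m k = (-1) ^ (m div (2 * sp_t p k) + 1)"

end

theory Submission
  imports Defs "HOL-Number_Theory.Residues"
begin

(*
  The adjacency matrix of a Cayley graph on (F_q, +) is diagonalized by the additive characters,
  so its eigenvalues are the character sums over the connection set; for R_k these are the Gauss
  periods. In the semiprimitive case m = 2^(e+1) j with k | p^j + 1. For Q = p^j the periods of
  F_(Q^2) are computed by averaging over the scalings by F_Q^*: R_k contains F_Q^*, and the trace
  to F_Q vanishes on a single coset of F_Q^*, so the periods take the two values (-1-Q)/k and
  (-1-Q)/k + Q. Each further quadratic extension expresses the new periods through the old ones
  by counting the representations of (trace, norm) pairs, which replaces the exceptional value D
  by -D^2; this produces the sign sigma. The complement has connection set F_q^* - R_k, so its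
  eigenvalues at nonzero b are -1 minus those of the Paley graph.
*)


lemma finite_card_roots_pow_eq:
  fixes c :: "'a::field"
  assumes "d > 0"
  shows "finite {x. x ^ d = c}" "card {x. x ^ d = c} \<le> d"
proof -
  let ?P = "Polynomial.monom 1 d + [:-c:]"
  have deg: "degree ?P = d" using assms by (subst degree_add_eq_left) (auto simp: degree_monom_eq)
  have P0: "?P \<noteq> 0" using deg assms by auto
  have eq: "{x. x ^ d = c} = {x. poly ?P x = 0}" by (auto simp: poly_monom)
  show "finite {x. x ^ d = c}" using poly_roots_finite[OF P0] eq by simp
  show "card {x. x ^ d = c} \<le> d" using card_poly_roots_bound[OF P0] eq deg by simp
qed

lemma card_fixed_points_pow_le:
  assumes "d > 1"
  shows "card {x::'a::field. x ^ d = x} \<le> d"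
proof -
  let ?P = "Polynomial.monom (1::'a) d + [:0, -1:]"
  have deg: "degree ?P = d" using assms by (subst degree_add_eq_left) (auto simp: degree_monom_eq)
  have P0: "?P \<noteq> 0" using deg assms by auto
  have eq: "{x::'a. x ^ d = x} = {x. poly ?P x = 0}" by (auto simp: poly_monom)
  show ?thesis using card_poly_roots_bound[OF P0] eq deg by simp
qed

lemma card_le_mult_card_image:
  assumes "finite A" "\<And>y. card {x\<in>A. f x = y} \<le> b"
  shows "card A \<le> b * card (f ` A)"
proof -
  have "A = (\<Union>y\<in>f ` A. {x\<in>A. f x = y})" by auto
  hence "card A \<le> (\<Sum>y\<in>f ` A. card {x\<in>A. f x = y})"
    by (metis card_UN_le assms(1) finite_imageI)
  also have "\<dots> \<le> (\<Sum>y\<in>f ` A. b)" by (intro sum_mono assms(2))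
  finally show ?thesis by (simp add: mult.commute)
qed

lemma card_image_pow_ge:
  fixes A :: "'a::field set"
  assumes "finite A" "d > 0"
  shows "card A \<le> d * card ((\<lambda>x. x ^ d) ` A)"
proof (rule card_le_mult_card_image[OF assms(1)])
  fix y
  have "{x\<in>A. x ^ d = y} \<subseteq> {x. x ^ d = y}" by auto
  thus "card {x\<in>A. x ^ d = y} \<le> d"
    using finite_card_roots_pow_eq[OF assms(2), of y] by (meson card_mono order_trans)
qed

lemma card_fibres_sum:
  assumes "finite A" "finite B" "g ` A \<subseteq> B"
  shows "(\<Sum>b\<in>B. card {a\<in>A. g a = b}) = card A"
proof -
  have "(\<Sum>b\<in>B. \<Sum>a\<in>{x. x \<in> A \<and> g x = b}. (1::nat)) = (\<Sum>a\<in>A. 1)"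
    by (rule sum.group[OF assms])
  thus ?thesis by simp
qed

lemma sum_by_fibres:
  assumes "finite A" "finite B" "g ` A \<subseteq> B"
  shows "(\<Sum>a\<in>A. f (g a)) = (\<Sum>b\<in>B. of_nat (card {a\<in>A. g a = b}) * (f b :: 'c::semiring_1))"
proof -
  have "(\<Sum>a\<in>A. f (g a)) = (\<Sum>b\<in>B. \<Sum>a\<in>{x. x \<in> A \<and> g x = b}. f (g a))"
    using sum.group[OF assms, of "\<lambda>a. f (g a)"] by simp
  also have "\<dots> = (\<Sum>b\<in>B. of_nat (card {a\<in>A. g a = b}) * f b)"
    by (intro sum.cong refl) simp
  finally show ?thesis .
qed

lemma sum_eq_bound_imp_all_eq:
  assumes "finite B" "\<And>b. b \<in> B \<Longrightarrow> h b \<le> (c::nat)" "(\<Sum>b\<in>B. h b) = c * card B" "b \<in> B"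
  shows "h b = c"
proof (rule ccontr)
  assume "h b \<noteq> c"
  hence "h b < c" using assms(2,4) by (simp add: le_neq_implies_less)
  hence "(\<Sum>b\<in>B. h b) < (\<Sum>b\<in>B. c)"
    using assms(1,2,4) by (intro sum_strict_mono_ex1) auto
  thus False using assms(3) by simp
qed

lemma quadratic_root_cases:
  fixes y u v :: "'a::field"
  assumes "y * y - (u + v) * y + u * v = 0"
  shows "y = u \<or> y = v"
proof -
  have "(y - u) * (y - v) = 0" using assms by (simp add: algebra_simps)
  thus ?thesis by simp
qed

lemma finite_card_quadratic_roots:
  fixes t c :: "'a::field"
  shows "finite {y. y * y - t * y + c = 0}" "card {y. y * y - t * y + c = 0} \<le> 2"
proof -
  let ?P = "[:c, -t, 1:]"
  have P: "?P \<noteq> 0" "degree ?P = 2" by simp_all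
  have eq: "{y. y * y - t * y + c = 0} = {y. poly ?P y = 0}" by (auto simp: algebra_simps)
  show "finite {y. y * y - t * y + c = 0}" using poly_roots_finite[OF P(1)] eq by simp
  show "card {y. y * y - t * y + c = 0} \<le> 2" using card_poly_roots_bound[OF P(1)] eq P(2) by simp
qed

lemma sum_prod_eq_cases:
  fixes x y u v :: "'a::field"
  assumes "x + y = u + v" "x * y = u * v"
  shows "(x, y) = (u, v) \<or> (x, y) = (v, u)"
proof -
  have "x * x - (u + v) * x + u * v = 0"
    unfolding assms[symmetric] by (simp add: algebra_simps)
  hence "x = u \<or> x = v" by (rule quadratic_root_cases)
  moreover have "y = u + v - x" using assms(1) by (simp add: algebra_simps)
  ultimately show ?thesis by auto
qed

lemma diff_1_dvd_power_diff_1: "(x::nat) - 1 dvd x ^ r - 1"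
proof (cases "x = 0")
  case True thus ?thesis by (cases r) auto
next
  case False
  show ?thesis
  proof (induction r)
    case (Suc r)
    have "x ^ r \<ge> 1" using False by simp
    hence "x ^ Suc r - 1 = x * (x ^ r - 1) + (x - 1)" using False
      by (simp add: algebra_simps diff_mult_distrib2)
    thus ?case using Suc by (simp add: dvd_add)
  qed simp
qed

lemma power_diff_1_dvd: "j dvd m \<Longrightarrow> (x::nat) ^ j - 1 dvd x ^ m - 1"
  using diff_1_dvd_power_diff_1[of "x ^ j"] by (auto simp: power_mult elim!: dvdE)

lemma square_diff_1: "(x::nat) ^ 2 - 1 = (x + 1) * (x - 1)"
  by (cases x) (simp_all add: power2_eq_square algebra_simps)

lemma dvd_plus_1_imp_dvd_power_diff_1:
  assumes "k dvd (x::nat) ^ j + 1" "2 * j dvd J"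
  shows "k dvd x ^ J - 1"
proof -
  have "x ^ j + 1 dvd (x ^ j) ^ 2 - 1" unfolding square_diff_1 by (rule dvd_triv_left)
  moreover have "(x ^ j) ^ 2 - 1 dvd x ^ J - 1"
    using power_diff_1_dvd[OF assms(2), of x] by (simp add: power_mult mult.commute)
  ultimately show ?thesis using assms(1) dvd_trans by blast
qed

lemma plus_1_dvd_odd_power_plus_1: "odd n \<Longrightarrow> (x::nat) + 1 dvd x ^ n + 1"
proof -
  assume n: "odd n"
  have "[int x = -1] (mod int x + 1)" by (simp add: cong_iff_dvd_diff)
  hence "[int x ^ n = (-1) ^ n] (mod int x + 1)" by (rule cong_pow)
  hence "int x + 1 dvd int x ^ n + 1" using n by (simp add: cong_iff_dvd_diff)
  hence "int (x + 1) dvd int (x ^ n + 1)" by (simp add: add.commute)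
  thus ?thesis by (simp only: int_dvd_int_iff)
qed

lemma dvd_plus_1_iff_cong_minus_1: "(k::nat) dvd a + 1 \<longleftrightarrow> [int a = -1] (mod int k)"
proof -
  have "k dvd a + 1 \<longleftrightarrow> int k dvd int a - (-1)" by (simp flip: int_dvd_int_iff add: add.commute)
  thus ?thesis by (simp only: cong_iff_dvd_diff)
qed

lemma cong_power_minus_1_mod:
  fixes x k :: int
  assumes a: "[x ^ a = -1] (mod k)" and t: "[x ^ t = -1] (mod k)"
  shows "[x ^ (t mod a) = -1] (mod k) \<or> [x ^ (a - t mod a) = -1] (mod k)"
proof -
  define r where "r = t mod a"
  have "x ^ t = (x ^ a) ^ (t div a) * x ^ r"
    unfolding r_def by (metis mult_div_mod_eq power_add power_mult)
  moreover have "[(x ^ a) ^ (t div a) * x ^ r = (-1) ^ (t div a) * x ^ r] (mod k)"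
    by (intro cong_scalar_right cong_pow a)
  ultimately have c: "[(-1) ^ (t div a) * x ^ r = -1] (mod k)"
    using t by (metis cong_sym cong_trans)
  show ?thesis
  proof (cases "even (t div a)")
    case True thus ?thesis using c unfolding r_def by simp
  next
    case False
    hence "[x ^ r = 1] (mod k)" using c by (simp add: cong_minus_minus_iff)
    hence "[x ^ (a - r) * x ^ r = x ^ (a - r) * 1] (mod k)" by (rule cong_scalar_left)
    moreover have "x ^ (a - r) * x ^ r = x ^ a"
    proof -
      have "a \<noteq> 0" using False by (metis div_by_0 even_zero)
      hence "a - r + r = a" unfolding r_def by simp
      thus ?thesis by (metis power_add)
    qed
    ultimately have "[x ^ (a - r) = -1] (mod k)" using a by (metis cong_sym cong_trans mult_1_right)
    thus ?thesis unfolding r_def by simp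
  qed
qed

lemma Least_power_plus_1_dvd:
  fixes x k t :: nat
  assumes t: "t > 0" "k dvd x ^ t + 1"
  defines "t0 \<equiv> LEAST j. 0 < j \<and> k dvd x ^ j + 1"
  shows "t0 > 0" "k dvd x ^ t0 + 1" "t0 dvd t"
proof -
  have P0: "0 < t0 \<and> k dvd x ^ t0 + 1" unfolding t0_def by (rule LeastI[of _ t]) (use t in auto)
  thus "t0 > 0" "k dvd x ^ t0 + 1" by auto
  have not_below: "\<not> (0 < r \<and> k dvd x ^ r + 1)" if "r < t0" for r
    using not_less_Least[of r "\<lambda>j. 0 < j \<and> k dvd x ^ j + 1"] that unfolding t0_def by blast
  have "k dvd x ^ (t mod t0) + 1 \<or> k dvd x ^ (t0 - t mod t0) + 1"
    unfolding dvd_plus_1_iff_cong_minus_1 of_nat_power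
    by (rule cong_power_minus_1_mod)
       (use P0 t(2) in \<open>simp_all only: dvd_plus_1_iff_cong_minus_1 of_nat_power\<close>)
  moreover have "t mod t0 < t0" using P0 by simp
  ultimately have "t mod t0 = 0" using not_below[of "t mod t0"] not_below[of "t0 - t mod t0"] by force
  thus "t0 dvd t" by (simp add: mod_eq_0_iff_dvd)
qed

lemma semiprimitive_pair_decomposition:
  fixes p m k :: nat
  assumes p: "prime p" and m: "m > 0" "even m" and sp: "semiprimitive_pair p m k"
  obtains j e where "j > 0" "k dvd p ^ j + 1" "m = j * 2 ^ (e + 1)"
    "sp_sigma p m k = (if e = 0 then 1 else -1)"
proof -
  have m2: "m div 2 > 0" using m by (auto elim: evenE)
  have "\<exists>t. 0 < t \<and> t dvd m div 2 \<and> k dvd p ^ t + 1"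
  proof (cases "k = 2")
    case True
    hence "p ^ m mod 4 = 1" using sp unfolding semiprimitive_pair_def by auto
    hence "odd (p ^ m)" by (metis dvd_mod_iff even_numeral odd_one)
    hence "odd p" using m(1) by simp
    thus ?thesis using True by (intro exI[of _ 1]) auto
  next
    case False
    then obtain t where "t dvd m div 2" "k dvd p ^ t + 1" using sp unfolding semiprimitive_pair_def by auto
    moreover have "t > 0" using calculation(1) m2 by (auto intro: Nat.gr0I)
    ultimately show ?thesis by blast
  qed
  then obtain t where t: "t > 0" "t dvd m div 2" "k dvd p ^ t + 1" by blast
  define t0 where "t0 = sp_t p k"
  have t0: "t0 > 0" "k dvd p ^ t0 + 1" "t0 dvd m div 2"
    using Least_power_plus_1_dvd[OF t(1,3)] dvd_trans[OF _ t(2)] unfolding t0_def sp_t_def by blast+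
  then obtain c where c: "m div 2 = t0 * c" by blast
  hence mc: "m = 2 * t0 * c" "c > 0" using m by (auto elim: evenE)
  obtain s where s: "c = 2 ^ multiplicity 2 c * s" "\<not> 2 dvd s"
    using multiplicity_decompose'[of c 2] mc(2) by auto
  define j where "j = t0 * s"
  have "j > 0" unfolding j_def using t0(1) s(2) by (auto intro: Nat.gr0I)
  moreover have "k dvd p ^ j + 1"
    using dvd_trans[OF t0(2) plus_1_dvd_odd_power_plus_1[OF s(2)]] unfolding j_def by (simp add: power_mult)
  moreover have "m = j * 2 ^ (multiplicity 2 c + 1)" unfolding j_def using mc(1) s(1) by (simp add: mult_ac)
  moreover have "sp_sigma p m k = (-1) ^ (c + 1)"
    unfolding sp_sigma_def t0_def[symmetric] using mc t0(1) by simp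
  hence "sp_sigma p m k = (if multiplicity 2 c = 0 then 1 else -1)"
    using s by (cases "multiplicity 2 c") auto
  ultimately show ?thesis using that by blast
qed


section \<open>Subfields, additive characters and Gauss periods\<close>

definition fixed_field :: "nat \<Rightarrow> 'a::field set" where
  "fixed_field Q = {x. x ^ Q = x}"

lemma fixed_field_0: "Q > 0 \<Longrightarrow> 0 \<in> fixed_field Q"
  unfolding fixed_field_def by simp

lemma fixed_field_1: "1 \<in> fixed_field Q"
  unfolding fixed_field_def by simp

lemma fixed_field_mult: "x \<in> fixed_field Q \<Longrightarrow> y \<in> fixed_field Q \<Longrightarrow> x * y \<in> fixed_field Q"
  unfolding fixed_field_def by (simp add: power_mult_distrib)

lemma fixed_field_inverse: "x \<in> fixed_field Q \<Longrightarrow> inverse x \<in> fixed_field Q"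
  unfolding fixed_field_def by (simp add: power_inverse)

lemma fixed_field_divide: "x \<in> fixed_field Q \<Longrightarrow> y \<in> fixed_field Q \<Longrightarrow> x / y \<in> fixed_field Q"
  unfolding fixed_field_def by (simp add: power_divide)

lemma fixed_field_subset_square: "fixed_field Q \<subseteq> fixed_field (Q ^ 2)"
  unfolding fixed_field_def by (auto simp: power2_eq_square power_mult)

definition additive_char_on :: "'a::field set \<Rightarrow> ('a \<Rightarrow> complex) \<Rightarrow> bool" where
  "additive_char_on K \<psi> \<longleftrightarrow> (\<forall>x\<in>K. \<forall>y\<in>K. \<psi> (x + y) = \<psi> x * \<psi> y)"

text \<open>Nontriviality of an additive character is expressed by orthogonality to the trivial one.\<close>
definition nontrivial_additive_char :: "'a::field set \<Rightarrow> ('a \<Rightarrow> complex) \<Rightarrow> bool" where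
  "nontrivial_additive_char K \<psi> \<longleftrightarrow> additive_char_on K \<psi> \<and> \<psi> 0 = 1 \<and> (\<Sum>x\<in>K. \<psi> x) = 0"

lemma sum_additive_char_eq_0:
  assumes "finite K" "additive_char_on K \<psi>" "x0 \<in> K" "\<psi> x0 \<noteq> 1"
    and "\<And>x y. x \<in> K \<Longrightarrow> y \<in> K \<Longrightarrow> x + y \<in> K"
    and "\<And>x y. x \<in> K \<Longrightarrow> y \<in> K \<Longrightarrow> x - y \<in> K"
  shows "(\<Sum>x\<in>K. \<psi> x) = 0"
proof -
  have "(\<Sum>x\<in>K. \<psi> x) = (\<Sum>x\<in>K. \<psi> (x + x0))"
    by (rule sum.reindex_bij_witness[of _ "\<lambda>y. y + x0" "\<lambda>y. y - x0"]) (use assms(3,5,6) in auto)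
  also have "\<dots> = (\<Sum>x\<in>K. \<psi> x) * \<psi> x0"
    using assms(2,3) unfolding additive_char_on_def by (simp add: sum_distrib_right)
  finally have "(\<Sum>x\<in>K. \<psi> x) * (1 - \<psi> x0) = 0" by (simp add: algebra_simps)
  thus ?thesis using assms(4) by simp
qed

text \<open>The \<open>k\<close>-th powers of the multiplicative group of the subfield of order \<open>Q\<close>, described as
  the kernel of \<open>x \<mapsto> x ^ ((Q - 1) div k)\<close>.\<close>
definition kth_powers_in :: "nat \<Rightarrow> nat \<Rightarrow> 'a::field set" where
  "kth_powers_in k Q = {x. x ^ ((Q - 1) div k) = 1}"

definition gauss_period :: "('a::field \<Rightarrow> complex) \<Rightarrow> 'a set \<Rightarrow> 'a \<Rightarrow> complex" where
  "gauss_period \<psi> A a = (\<Sum>x\<in>A. \<psi> (a * x))"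

definition two_valued_gauss_periods :: "nat \<Rightarrow> ('a::field \<Rightarrow> complex) \<Rightarrow> nat \<Rightarrow> 'a \<Rightarrow> complex \<Rightarrow> bool" where
  "two_valued_gauss_periods k \<psi> Q w D \<longleftrightarrow> (\<forall>c\<in>fixed_field Q - {0}.
     gauss_period \<psi> (kth_powers_in k Q) c = (-1 - D) / of_nat k + (if c / w \<in> kth_powers_in k Q then D else 0))"

lemma kth_powers_in_mult: "x \<in> kth_powers_in k Q \<Longrightarrow> y \<in> kth_powers_in k Q \<Longrightarrow> x * y \<in> kth_powers_in k Q"
  unfolding kth_powers_in_def by (simp add: power_mult_distrib)

lemma kth_powers_in_inverse: "x \<in> kth_powers_in k Q \<Longrightarrow> inverse x \<in> kth_powers_in k Q"
  unfolding kth_powers_in_def by (simp add: power_inverse)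

lemma kth_powers_in_divide: "x \<in> kth_powers_in k Q \<Longrightarrow> y \<in> kth_powers_in k Q \<Longrightarrow> x / y \<in> kth_powers_in k Q"
  unfolding kth_powers_in_def by (simp add: power_divide)

lemma kth_powers_in_inverse_iff: "inverse x \<in> kth_powers_in k Q \<longleftrightarrow> x \<in> kth_powers_in k Q"
  using kth_powers_in_inverse by fastforce

lemma
  fixes x :: "'a::field"
  assumes "k dvd Q - 1" "Q \<ge> 2"
  shows kth_powers_in_nonzero: "x \<in> kth_powers_in k Q \<Longrightarrow> x \<noteq> 0"
    and kth_powers_in_subset: "kth_powers_in k Q \<subseteq> (fixed_field Q :: 'a set)"
proof -
  obtain r where r: "Q - 1 = k * r" using assms(1) by blast
  have "r > 0" "k > 0" using r assms(2) by (auto intro: Nat.gr0I)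
  hence rd: "(Q - 1) div k = r" using r by simp
  show "x \<in> kth_powers_in k Q \<Longrightarrow> x \<noteq> 0"
    unfolding kth_powers_in_def rd using \<open>r > 0\<close> by (auto simp: power_0_left)
  have "y ^ Q = y" if "y ^ r = 1" for y :: 'a
  proof -
    have "y ^ (Q - 1) = 1" unfolding r using that by (simp add: power_mult mult.commute[of k])
    moreover have "Q = Suc (Q - 1)" using assms(2) by simp
    ultimately show ?thesis by (metis power_Suc mult_1_right)
  qed
  thus "kth_powers_in k Q \<subseteq> (fixed_field Q :: 'a set)" unfolding kth_powers_in_def fixed_field_def rd by auto
qed

lemma gauss_period_eq_sum_if:
  assumes "a \<noteq> 0" "finite B" "\<And>v. v / a \<in> A \<Longrightarrow> v \<in> B"
  shows "gauss_period \<psi> A a = (\<Sum>v\<in>B. if v / a \<in> A then \<psi> v else 0)"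
proof -
  have "gauss_period \<psi> A a = (\<Sum>v\<in>{v\<in>B. v / a \<in> A}. \<psi> v)"
    unfolding gauss_period_def
    by (rule sum.reindex_bij_witness[of _ "\<lambda>v. v / a" "\<lambda>x. a * x"]) (use assms in auto)
  thus ?thesis using assms(2) by (simp add: sum.inter_filter)
qed

lemma sum_nonzero_additive_char_mult:
  fixes \<psi> :: "'a::{field,finite} \<Rightarrow> complex"
  assumes "nontrivial_additive_char (fixed_field Q) \<psi>" "Q > 0" "z \<in> fixed_field Q"
  shows "(\<Sum>c\<in>fixed_field Q - {0}. \<psi> (c * z))
           = (if z = 0 then of_nat (card (fixed_field Q :: 'a set)) - 1 else -1)"
proof -
  let ?K = "fixed_field Q :: 'a set"
  have \<psi>: "\<psi> 0 = 1" "(\<Sum>x\<in>?K. \<psi> x) = 0" using assms(1) unfolding nontrivial_additive_char_def by auto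
  have K0: "0 \<in> ?K" using fixed_field_0 assms(2) by blast
  show ?thesis
  proof (cases "z = 0")
    case True
    have "card ?K \<ge> 1" using K0 by (metis card_0_eq finite less_one not_less empty_iff)
    thus ?thesis using True \<psi>(1) K0 by (simp add: card_Diff_singleton of_nat_diff)
  next
    case False
    have "(\<Sum>c\<in>?K. \<psi> (c * z)) = (\<Sum>c\<in>?K. \<psi> c)"
      by (rule sum.reindex_bij_witness[of _ "\<lambda>c. c / z" "\<lambda>c. c * z"])
         (use False assms(3) fixed_field_mult fixed_field_divide in auto)
    hence "\<psi> (0 * z) + (\<Sum>c\<in>?K - {0}. \<psi> (c * z)) = 0" using \<psi>(2) K0 by (simp add: sum.remove)
    thus ?thesis using \<psi>(1) False by (simp add: add_eq_0_iff)
  qed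
qed

lemma gauss_period_kth_powers_in:
  fixes \<psi> :: "'a::{field,finite} \<Rightarrow> complex"
  assumes "k dvd Q - 1" "Q \<ge> 2" "c \<in> fixed_field Q" "c \<noteq> 0"
  shows "gauss_period \<psi> (kth_powers_in k Q) c
           = (\<Sum>v\<in>fixed_field Q. if v / c \<in> kth_powers_in k Q then \<psi> v else 0)"
proof (rule gauss_period_eq_sum_if[OF assms(4)])
  fix v assume "v / c \<in> kth_powers_in k Q"
  hence "v / c * c \<in> fixed_field Q"
    using kth_powers_in_subset[OF assms(1,2)] assms(3) fixed_field_mult by blast
  thus "v \<in> fixed_field Q" using assms(4) by simp
qed simp

lemma gauss_period_eq_sum_inverse_in:
  fixes \<psi> :: "'a::{field,finite} \<Rightarrow> complex"
  assumes "k dvd Q - 1" "Q \<ge> 2" "c \<in> fixed_field Q" "c \<noteq> 0"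
  shows "(\<Sum>u\<in>fixed_field Q - {0}. if c / u \<in> kth_powers_in k Q then \<psi> u else 0)
           = gauss_period \<psi> (kth_powers_in k Q) c"
proof -
  have "(0::'a) \<notin> kth_powers_in k Q" using kth_powers_in_nonzero[OF assms(1,2)] by blast
  moreover have "c / u \<in> kth_powers_in k Q \<longleftrightarrow> u / c \<in> kth_powers_in k Q" for u
    using kth_powers_in_inverse_iff[of "u / c" k Q] by simp
  ultimately have "(\<Sum>u\<in>fixed_field Q - {0}. if c / u \<in> kth_powers_in k Q then \<psi> u else 0)
      = (\<Sum>u\<in>fixed_field Q. if u / c \<in> kth_powers_in k Q then \<psi> u else 0)"
    by (intro sum.mono_neutral_cong_left) auto
  thus ?thesis using gauss_period_kth_powers_in[OF assms] by simp
qed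

lemma sum_pairs_gauss_period:
  fixes \<psi> :: "'a::{field,finite} \<Rightarrow> complex"
  assumes k: "k dvd Q - 1" "Q \<ge> 2" and \<psi>: "additive_char_on (fixed_field Q) \<psi>"
    and b: "b \<in> fixed_field Q" "b \<noteq> 0"
  shows "(\<Sum>u\<in>fixed_field Q. \<Sum>v\<in>fixed_field Q. if u * v / b \<in> kth_powers_in k Q then \<psi> (u + v) else 0)
           = (\<Sum>u\<in>fixed_field Q - {0}. \<psi> u * gauss_period \<psi> (kth_powers_in k Q) (b / u))"
proof -
  let ?K = "fixed_field Q :: 'a set" and ?S = "kth_powers_in k Q :: 'a set"
  let ?f = "\<lambda>u. \<Sum>v\<in>?K. if u * v / b \<in> ?S then \<psi> (u + v) else 0"
  have K0: "0 \<in> ?K" by (rule fixed_field_0) (use k(2) in simp)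
  have "(0::'a) \<notin> ?S" using kth_powers_in_nonzero[OF k] by blast
  hence "?f 0 = 0" by simp
  hence "(\<Sum>u\<in>?K. ?f u) = (\<Sum>u\<in>?K - {0}. ?f u)" using sum.remove[OF _ K0, of ?f] by simp
  moreover have "?f u = \<psi> u * gauss_period \<psi> ?S (b / u)" if u: "u \<in> ?K - {0}" for u
  proof -
    have "b / u \<in> ?K" "b / u \<noteq> 0" using u b fixed_field_divide by auto
    moreover have "(if u * v / b \<in> ?S then \<psi> (u + v) else 0)
        = \<psi> u * (if v / (b / u) \<in> ?S then \<psi> v else 0)" if "v \<in> ?K" for v
      using u that \<psi> unfolding additive_char_on_def by (simp add: mult.commute)
    ultimately show ?thesis by (simp add: gauss_period_kth_powers_in[OF k] sum_distrib_left)
  qed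
  ultimately show ?thesis by simp
qed

lemma card_trace_norm_fibre_le:
  fixes t c :: "'a::field" and L :: "'a set" and Q :: nat
  defines "K \<equiv> fixed_field Q"
  shows "card {x\<in>L. x + x ^ Q = t \<and> x * x ^ Q = c} + card {(u, v)\<in>K \<times> K. u + v = t \<and> u * v = c} \<le> 2"
proof -
  let ?A = "{x\<in>L. x + x ^ Q = t \<and> x * x ^ Q = c}" and ?B = "{(u, v)\<in>K \<times> K. u + v = t \<and> u * v = c}"
  have A_roots: "?A \<subseteq> {y. y * y - t * y + c = 0}" by (auto simp: algebra_simps)
  show ?thesis
  proof (cases "?B = {}")
    case True
    have "card ?B = 0" by (simp only: True card.empty)
    thus ?thesis using card_mono[OF _ A_roots] finite_card_quadratic_roots[of t c] by simp
  next
    case False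
    then obtain u v where uv: "u \<in> K" "v \<in> K" "u + v = t" "u * v = c" by blast
    have A_sub: "?A \<subseteq> {u, v}"
      using A_roots uv(3,4) quadratic_root_cases[of _ u v] by auto
    have B_sub: "?B \<subseteq> {(u, v), (v, u)}"
      using sum_prod_eq_cases[of _ _ u v] uv(3,4) by auto
    show ?thesis
    proof (cases "u = v")
      case True
      thus ?thesis using card_mono[OF _ A_sub] card_mono[OF _ B_sub] by simp
    next
      case False
      \<comment> \<open>a root in \<open>K\<close> satisfies \<open>y + y ^ Q = 2 y\<close>, which would force \<open>u = v\<close>\<close>
      have A0: "?A = {}"
      proof (rule equals0I)
        fix y assume y: "y \<in> ?A"
        hence yuv: "y \<in> {u, v}" using A_sub by auto
        hence "y ^ Q = y" using uv(1,2) unfolding K_def fixed_field_def by auto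
        hence "y + y = u + v" using y uv(3) by simp
        thus False using yuv False by auto
      qed
      have "card ?A = 0" by (simp only: A0 card.empty)
      moreover have "card {(u, v), (v, u)} \<le> 2" by (rule card_insert_le_m1) simp_all
      ultimately show ?thesis using card_mono[OF _ B_sub] by simp
    qed
  qed
qed


section \<open>Finite fields of prime power order\<close>

locale prime_power_field =
  fixes p m :: nat and field_type :: "'a::{field,finite} itself"
  assumes prime_p: "prime p" and card_UNIV: "CARD('a) = p ^ m"
begin

abbreviation "q \<equiv> p ^ m"

lemma p_gt_1: "p > 1"
  using prime_p prime_gt_1_nat by blast

lemma m_pos: "m > 0"
proof (rule ccontr)
  assume "\<not> m > 0"
  hence "CARD('a) = 1" using card_UNIV by simp
  moreover have "card {0::'a, 1} \<le> CARD('a)" by (rule card_mono) auto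
  ultimately show False by simp
qed

lemma q_gt_1: "q > 1"
  using one_less_power[OF p_gt_1 m_pos] .

lemma power_p_ge_2: "j > 0 \<Longrightarrow> p ^ j \<ge> 2"
  using p_gt_1 by (metis Suc_1 Suc_leI one_less_power)

lemma power_p_ge_2_of_dvd: "j dvd m \<Longrightarrow> p ^ j \<ge> 2"
  using m_pos by (intro power_p_ge_2) (auto intro: Nat.gr0I)

lemma CHAR_eq: "CHAR('a) = p"
proof -
  have "CHAR('a) dvd p ^ m" using CHAR_dvd_CARD[where 'a='a] card_UNIV by simp
  moreover have "prime CHAR('a)" by (rule prime_CHAR_semidom, rule finite_imp_CHAR_pos) simp
  ultimately show ?thesis
    using prime_p prime_dvd_power primes_dvd_imp_eq by blast
qed

lemma frobenius_add: "((x::'a) + y) ^ (p ^ j) = x ^ (p ^ j) + y ^ (p ^ j)"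
  by (rule freshmans_dream') (auto simp: CHAR_eq prime_p)

lemma frobenius_sum: "(sum (f :: 'b \<Rightarrow> 'a) A) ^ (p ^ j) = (\<Sum>i\<in>A. f i ^ (p ^ j))"
  by (rule freshmans_dream_sum') (auto simp: CHAR_eq prime_p)

lemma frobenius_diff: "((x::'a) - y) ^ (p ^ j) = x ^ (p ^ j) - y ^ (p ^ j)"
  using frobenius_add[of "x - y" y] by (simp add: algebra_simps)

lemma fixed_field_add:
  "(x::'a) \<in> fixed_field (p ^ j) \<Longrightarrow> y \<in> fixed_field (p ^ j) \<Longrightarrow> x + y \<in> fixed_field (p ^ j)"
  unfolding fixed_field_def by (simp add: frobenius_add)

lemma fixed_field_diff:
  "(x::'a) \<in> fixed_field (p ^ j) \<Longrightarrow> y \<in> fixed_field (p ^ j) \<Longrightarrow> x - y \<in> fixed_field (p ^ j)"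
  unfolding fixed_field_def by (simp add: frobenius_diff)

text \<open>Multiplication by \<open>x\<close> permutes the nonzero elements.\<close>
lemma power_q_minus_1: "(x::'a) \<noteq> 0 \<Longrightarrow> x ^ (q - 1) = 1"
proof -
  assume x: "x \<noteq> 0"
  let ?U = "UNIV - {0::'a}"
  have "(\<Prod>y\<in>?U. x * y) = (\<Prod>y\<in>?U. y)"
    by (rule prod.reindex_bij_witness[of _ "\<lambda>y. y / x" "\<lambda>y. x * y"]) (use x in auto)
  moreover have "(\<Prod>y\<in>?U. x * y) = x ^ (q - 1) * (\<Prod>y\<in>?U. y)"
    using card_UNIV by (simp add: prod.distrib card_Diff_singleton)
  moreover have "(\<Prod>y\<in>?U. y) \<noteq> 0" by simp
  ultimately show ?thesis by simp
qed

lemma power_q: "(x::'a) ^ q = x"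
proof (cases "x = 0")
  case False
  have "q = Suc (q - 1)" using q_gt_1 by simp
  hence "x ^ q = x * x ^ (q - 1)" by (metis power_Suc)
  thus ?thesis using power_q_minus_1[OF False] by simp
qed (use m_pos p_gt_1 in auto)

lemma card_roots_of_unity:
  assumes "d dvd q - 1"
  shows "card {x::'a. x ^ d = 1} = d"
proof -
  obtain e where e: "q - 1 = d * e" using assms by blast
  have pos: "d > 0" "e > 0" using e q_gt_1 by (auto intro: Nat.gr0I)
  let ?U = "{x::'a. x ^ d = 1}"
  have "(x ^ e) ^ d = 1" if "x \<noteq> 0" for x :: 'a
    by (metis e mult.commute power_mult power_q_minus_1 that)
  hence "(\<lambda>x. x ^ e) ` (UNIV - {0}) \<subseteq> ?U" by auto
  hence "card (UNIV - {0::'a}) \<le> e * card ?U"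
    using card_image_pow_ge[of "UNIV - {0::'a}" e] pos(2) by (meson card_mono finite order_trans mult_le_mono2)
  hence "d \<le> card ?U" using card_UNIV e pos by (simp add: card_Diff_singleton mult.commute)
  with finite_card_roots_pow_eq[OF pos(1), of "1::'a"] show ?thesis by simp
qed

lemma card_fixed_field:
  assumes "j dvd m"
  shows "card (fixed_field (p ^ j) :: 'a set) = p ^ j"
proof -
  have j: "j > 0" using assms m_pos by (auto intro: Nat.gr0I)
  have "fixed_field (p ^ j) = insert 0 {x::'a. x ^ (p ^ j - 1) = 1}"
  proof -
    have "p ^ j = Suc (p ^ j - 1)" using power_p_ge_2[OF j] by simp
    hence "x ^ p ^ j = x \<longleftrightarrow> x = 0 \<or> x ^ (p ^ j - 1) = 1" for x :: 'a
      by (metis mult_cancel_left1 power_Suc power_Suc0_right power_0_Suc)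
    thus ?thesis unfolding fixed_field_def by auto
  qed
  moreover have "0 \<notin> {x::'a. x ^ (p ^ j - 1) = 1}" using power_p_ge_2[OF j] by (simp add: power_0_left)
  ultimately show ?thesis
    using card_roots_of_unity[OF power_diff_1_dvd[OF assms]] power_p_ge_2[OF j] by simp
qed

lemma kth_powers_eq_roots:
  assumes "k dvd q - 1"
  shows "kth_powers k = {x::'a. x ^ ((q - 1) div k) = 1}"
proof -
  obtain r where r: "q - 1 = k * r" using assms by blast
  have k: "k > 0" using r q_gt_1 by (auto intro: Nat.gr0I)
  let ?U = "{x::'a. x ^ r = 1}"
  have "(x ^ k) ^ r = 1" if "x \<noteq> 0" for x :: 'a
    by (metis r power_mult power_q_minus_1 that)
  hence sub: "kth_powers k \<subseteq> ?U" unfolding kth_powers_def by auto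
  have "kth_powers k = (\<lambda>x::'a. x ^ k) ` (UNIV - {0})" unfolding kth_powers_def by auto
  hence "k * r \<le> k * card (kth_powers k :: 'a set)"
    using card_image_pow_ge[of "UNIV - {0::'a}" k] k card_UNIV r by (simp add: card_Diff_singleton)
  hence "card ?U \<le> card (kth_powers k :: 'a set)"
    using card_roots_of_unity[of r] k r by simp
  hence "kth_powers k = ?U" using card_mono[OF _ sub] by (intro card_subset_eq[OF _ sub]) simp_all
  thus ?thesis using r k by simp
qed

lemma card_kth_powers:
  assumes "k dvd q - 1"
  shows "card (kth_powers k :: 'a set) = (q - 1) div k"
  using kth_powers_eq_roots[OF assms] card_roots_of_unity[of "(q - 1) div k"] assms
  by (metis dvd_div_mult_self dvd_triv_left)

lemma prime_field_eq: "fixed_field p = (of_nat ` {..<p} :: 'a set)"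
proof -
  have "(of_nat r :: 'a) ^ p = of_nat r" for r
  proof (induction r)
    case (Suc r)
    thus ?case using frobenius_add[of "of_nat r" 1 1] by (simp add: add.commute)
  qed (use p_gt_1 in simp)
  hence sub: "(of_nat ` {..<p} :: 'a set) \<subseteq> fixed_field p" unfolding fixed_field_def by auto
  have "inj_on (of_nat :: nat \<Rightarrow> 'a) {..<p}"
    using of_nat_eq_iff_cong_CHAR[where 'a='a] by (auto simp: inj_on_def CHAR_eq cong_def)
  hence "card (of_nat ` {..<p} :: 'a set) = p" by (simp add: card_image)
  moreover have "card (fixed_field p :: 'a set) \<le> p"
    unfolding fixed_field_def using card_fixed_points_pow_le p_gt_1 by blast
  ultimately show ?thesis using sub by (intro card_seteq[symmetric]) simp_all
qed

definition prime_field_index :: "'a \<Rightarrow> nat" where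
  "prime_field_index y = (SOME r. r < p \<and> of_nat r = y)"

lemma prime_field_index:
  assumes "y \<in> fixed_field p"
  shows "prime_field_index y < p" "of_nat (prime_field_index y) = y"
proof -
  have "\<exists>r. r < p \<and> of_nat r = y" using assms prime_field_eq by auto
  hence "prime_field_index y < p \<and> of_nat (prime_field_index y) = y"
    unfolding prime_field_index_def by (rule someI_ex)
  thus "prime_field_index y < p" "of_nat (prime_field_index y) = y" by auto
qed

definition prime_field_char :: "'a \<Rightarrow> complex" where
  "prime_field_char y = exp (2 * of_real pi * \<i> * of_nat (prime_field_index y) / of_nat p)"

lemma additive_char_prime_field_char: "additive_char_on (fixed_field p) prime_field_char"
  unfolding additive_char_on_def
proof (intro ballI)
  fix a b :: 'a assume ab: "a \<in> fixed_field p" "b \<in> fixed_field p"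
  hence "a + b \<in> fixed_field p" using fixed_field_add[of a 1 b] by simp
  hence "(of_nat (prime_field_index a + prime_field_index b) :: 'a) = of_nat (prime_field_index (a + b))"
    unfolding of_nat_add using prime_field_index(2) ab by simp
  hence "[prime_field_index a + prime_field_index b = prime_field_index (a + b)] (mod p)"
    by (subst (asm) of_nat_eq_iff_cong_CHAR) (simp add: CHAR_eq)
  hence "exp (2 * of_real pi * \<i> * of_nat (prime_field_index a + prime_field_index b) / of_nat p)
       = prime_field_char (a + b)"
    unfolding prime_field_char_def
    using complex_root_unity_eq[of p "prime_field_index a + prime_field_index b" "prime_field_index (a + b)"]
      p_gt_1 by (simp add: cong_def)
  thus "prime_field_char (a + b) = prime_field_char a * prime_field_char b"
    unfolding prime_field_char_def by (simp add: add_divide_distrib distrib_left exp_add)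
qed

lemma prime_field_char_0: "prime_field_char 0 = 1"
proof -
  have "(0::'a) \<in> fixed_field p" by (rule fixed_field_0) (use p_gt_1 in simp)
  hence "prime_field_index (0::'a) < p" "(of_nat (prime_field_index (0::'a)) :: 'a) = of_nat 0"
    using prime_field_index by auto
  hence "prime_field_index (0::'a) = 0"
    using of_nat_eq_iff_cong_CHAR[where 'a='a, of "prime_field_index (0::'a)" 0]
    by (simp add: CHAR_eq cong_def)
  thus ?thesis unfolding prime_field_char_def by simp
qed

lemma prime_field_char_neq_1:
  assumes "y \<in> fixed_field p" "y \<noteq> 0"
  shows "prime_field_char y \<noteq> 1"
proof -
  have "0 < prime_field_index y" "prime_field_index y < p"
    using prime_field_index[OF assms(1)] assms(2) by (auto intro: Nat.gr0I)
  thus ?thesis unfolding prime_field_char_def using complex_root_unity_eq_1[of p] p_gt_1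
    by (simp add: nat_dvd_not_less)
qed

definition trace_to_prime_field :: "nat \<Rightarrow> 'a \<Rightarrow> 'a" where
  "trace_to_prime_field j x = (\<Sum>i<j. x ^ (p ^ i))"

lemma trace_to_prime_field_add:
  "trace_to_prime_field j (x + y) = trace_to_prime_field j x + trace_to_prime_field j y"
  unfolding trace_to_prime_field_def by (simp add: frobenius_add sum.distrib)

lemma trace_to_prime_field_in:
  assumes "x \<in> fixed_field (p ^ j)"
  shows "trace_to_prime_field j x \<in> fixed_field p"
proof -
  have "trace_to_prime_field j x ^ p ^ 1 = (\<Sum>i<j. x ^ (p ^ Suc i))"
    unfolding trace_to_prime_field_def frobenius_sum by (simp add: mult.commute flip: power_mult)
  also have "\<dots> = (\<Sum>i<Suc j. x ^ (p ^ i)) - x ^ (p ^ 0)"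
    by (subst sum.lessThan_Suc_shift) simp
  also have "\<dots> = trace_to_prime_field j x + x ^ (p ^ j) - x"
    unfolding trace_to_prime_field_def by simp
  finally show ?thesis using assms unfolding fixed_field_def by simp
qed

lemma trace_to_prime_field_nonzero:
  assumes "j dvd m"
  obtains x where "x \<in> fixed_field (p ^ j)" "trace_to_prime_field j x \<noteq> 0"
proof -
  have j: "j > 0" using assms m_pos by (auto intro: Nat.gr0I)
  let ?P = "\<Sum>i<j. Polynomial.monom (1::'a) (p ^ i)"
  have "\<And>i. p ^ i = p ^ (j - 1) \<longleftrightarrow> i = j - 1" using p_gt_1 by (simp add: power_inject_exp)
  hence "Polynomial.coeff ?P (p ^ (j - 1)) = (\<Sum>i<j. if i = j - 1 then 1 else 0)"
    by (simp add: Polynomial.coeff_sum Polynomial.coeff_monom)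
  hence P0: "?P \<noteq> 0" using j by auto
  have "degree ?P \<le> p ^ (j - 1)"
    using p_gt_1 by (intro degree_sum_le) (auto simp: degree_monom_eq intro: power_increasing)
  hence "card {x. poly ?P x = 0} \<le> p ^ (j - 1)"
    using card_poly_roots_bound[OF P0] by linarith
  also have "\<dots> < card (fixed_field (p ^ j) :: 'a set)"
    unfolding card_fixed_field[OF assms] using p_gt_1 j by (intro power_strict_increasing) auto
  finally have "\<not> fixed_field (p ^ j) \<subseteq> {x. poly ?P x = 0}"
    using card_mono[of "{x. poly ?P x = 0}"] by (meson finite leD)
  moreover have "poly ?P x = trace_to_prime_field j x" for x
    unfolding trace_to_prime_field_def by (simp add: poly_sum poly_monom)
  ultimately show ?thesis using that by auto
qed

lemma nontrivial_additive_char_subfield: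
  assumes "j dvd m"
  shows "nontrivial_additive_char (fixed_field (p ^ j))
           (\<lambda>x. prime_field_char (trace_to_prime_field j x))"
proof -
  let ?K = "fixed_field (p ^ j) :: 'a set"
  have add: "additive_char_on ?K (\<lambda>x. prime_field_char (trace_to_prime_field j x))"
    using additive_char_prime_field_char trace_to_prime_field_in
    unfolding additive_char_on_def by (simp add: trace_to_prime_field_add)
  have "trace_to_prime_field j 0 = (0::'a)"
    unfolding trace_to_prime_field_def using p_gt_1 by (simp add: power_0_left)
  hence "prime_field_char (trace_to_prime_field j (0::'a)) = 1" by (simp add: prime_field_char_0)
  moreover obtain x0 where "x0 \<in> ?K" "trace_to_prime_field j x0 \<noteq> 0"
    using trace_to_prime_field_nonzero[OF assms] .
  hence "(\<Sum>x\<in>?K. prime_field_char (trace_to_prime_field j x)) = 0"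
    using prime_field_char_neq_1 trace_to_prime_field_in fixed_field_add fixed_field_diff
    by (intro sum_additive_char_eq_0[OF _ add]) auto
  ultimately show ?thesis using add unfolding nontrivial_additive_char_def by blast
qed


subsection \<open>Quadratic extensions\<close>

lemma card_fixed_field_square:
  "2 * j dvd m \<Longrightarrow> card (fixed_field ((p ^ j) ^ 2) :: 'a set) = (p ^ j) ^ 2"
  using card_fixed_field[of "2 * j"] by (simp add: power_mult mult.commute)

lemma trace_norm_in_subfield:
  assumes "(x::'a) \<in> fixed_field ((p ^ j) ^ 2)"
  shows "x + x ^ (p ^ j) \<in> fixed_field (p ^ j)" "x * x ^ (p ^ j) \<in> fixed_field (p ^ j)"
proof -
  have "(x ^ p ^ j) ^ p ^ j = x"
    using assms unfolding fixed_field_def by (simp add: power2_eq_square flip: power_mult)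
  thus "x + x ^ (p ^ j) \<in> fixed_field (p ^ j)" "x * x ^ (p ^ j) \<in> fixed_field (p ^ j)"
    unfolding fixed_field_def by (simp_all add: frobenius_add power_mult_distrib ac_simps)
qed

text \<open>Counting, for each pair \<open>(t, c)\<close>, the roots of \<open>y\<^sup>2 - t y + c\<close>: they lie either in the
  quadratic extension (as a conjugate pair) or in the base field (as an ordered pair).\<close>
lemma sum_trace_norm_plus_sum_pairs:
  fixes f :: "'a \<Rightarrow> 'a \<Rightarrow> complex"
  assumes "2 * j dvd m"
  defines "Q \<equiv> p ^ j"
  shows "(\<Sum>x\<in>fixed_field (Q ^ 2). f (x + x ^ Q) (x * x ^ Q))
           + (\<Sum>u\<in>fixed_field Q. \<Sum>v\<in>fixed_field Q. f (u + v) (u * v))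
         = 2 * (\<Sum>t\<in>fixed_field Q. \<Sum>c\<in>fixed_field Q. f t c)"
proof -
  let ?K = "fixed_field Q :: 'a set" and ?L = "fixed_field (Q ^ 2) :: 'a set"
  define gL where "gL x = (x + x ^ Q, x * x ^ Q)" for x :: 'a
  define gP where "gP = (\<lambda>(u, v). (u + v, u * v :: 'a))"
  define cL where "cL b = card {x\<in>?L. gL x = b}" for b
  define cP where "cP b = card {a\<in>?K \<times> ?K. gP a = b}" for b
  have cK: "card ?K = Q" unfolding Q_def using assms by (intro card_fixed_field) (rule dvd_mult_right)
  have imL: "gL ` ?L \<subseteq> ?K \<times> ?K" unfolding gL_def Q_def using trace_norm_in_subfield by auto
  have imP: "gP ` (?K \<times> ?K) \<subseteq> ?K \<times> ?K"
    unfolding gP_def Q_def using fixed_field_add fixed_field_mult by auto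
  have sL: "(\<Sum>x\<in>?L. f (x + x ^ Q) (x * x ^ Q)) = (\<Sum>b\<in>?K \<times> ?K. of_nat (cL b) * case_prod f b)"
    using sum_by_fibres[OF _ _ imL, of "case_prod f"] unfolding cL_def gL_def by simp
  have sP: "(\<Sum>u\<in>?K. \<Sum>v\<in>?K. f (u + v) (u * v)) = (\<Sum>b\<in>?K \<times> ?K. of_nat (cP b) * case_prod f b)"
    using sum_by_fibres[OF _ _ imP, of "case_prod f"]
    unfolding cP_def gP_def by (simp add: sum.cartesian_product case_prod_beta)
  have le2: "cL b + cP b \<le> 2" for b
  proof (cases b)
    case (Pair t c)
    have "{x\<in>?L. gL x = b} = {x\<in>?L. x + x ^ Q = t \<and> x * x ^ Q = c}"
      unfolding Pair gL_def by simp
    moreover have "{a\<in>?K \<times> ?K. gP a = b} = {(u, v)\<in>?K \<times> ?K. u + v = t \<and> u * v = c}"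
      unfolding Pair gP_def by (simp add: set_eq_iff split_beta)
    ultimately show ?thesis using card_trace_norm_fibre_le[of ?L Q t c] unfolding cL_def cP_def by simp
  qed
  have "(\<Sum>b\<in>?K \<times> ?K. cL b) = card ?L"
    unfolding cL_def by (rule card_fibres_sum[OF _ _ imL]) simp_all
  moreover have "(\<Sum>b\<in>?K \<times> ?K. cP b) = card (?K \<times> ?K)"
    unfolding cP_def by (rule card_fibres_sum[OF _ _ imP]) simp_all
  ultimately have "(\<Sum>b\<in>?K \<times> ?K. cL b + cP b) = card ?L + card (?K \<times> ?K)"
    by (simp add: sum.distrib)
  also have "\<dots> = 2 * card (?K \<times> ?K)"
    using card_fixed_field_square[OF assms(1)] cK by (simp add: Q_def card_cartesian_product power2_eq_square)
  finally have total: "(\<Sum>b\<in>?K \<times> ?K. cL b + cP b) = 2 * card (?K \<times> ?K)" .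
  have eq2: "cL b + cP b = 2" if "b \<in> ?K \<times> ?K" for b
    by (rule sum_eq_bound_imp_all_eq[OF _ _ total that]) (simp_all add: le2)
  have "(\<Sum>x\<in>?L. f (x + x ^ Q) (x * x ^ Q)) + (\<Sum>u\<in>?K. \<Sum>v\<in>?K. f (u + v) (u * v))
        = (\<Sum>b\<in>?K \<times> ?K. of_nat (cL b + cP b) * case_prod f b)"
    unfolding sL sP by (simp add: sum.distrib[symmetric] distrib_right)
  also have "\<dots> = 2 * (\<Sum>t\<in>?K. \<Sum>c\<in>?K. f t c)"
    using eq2 by (simp add: sum_distrib_left sum.cartesian_product)
  finally show ?thesis .
qed

lemma nontrivial_additive_char_trace:
  fixes \<psi> :: "'a \<Rightarrow> complex"
  assumes "2 * j dvd m" "nontrivial_additive_char (fixed_field (p ^ j)) \<psi>"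
  shows "nontrivial_additive_char (fixed_field ((p ^ j) ^ 2)) (\<lambda>x. \<psi> (x + x ^ p ^ j))"
proof -
  let ?K = "fixed_field (p ^ j) :: 'a set"
  have \<psi>: "additive_char_on ?K \<psi>" "\<psi> 0 = 1" "(\<Sum>x\<in>?K. \<psi> x) = 0"
    using assms(2) unfolding nontrivial_additive_char_def by auto
  have "additive_char_on (fixed_field ((p ^ j) ^ 2)) (\<lambda>x. \<psi> (x + x ^ p ^ j))"
    unfolding additive_char_on_def
  proof (intro ballI)
    fix x y :: 'a assume "x \<in> fixed_field ((p ^ j) ^ 2)" "y \<in> fixed_field ((p ^ j) ^ 2)"
    hence "x + x ^ p ^ j \<in> ?K" "y + y ^ p ^ j \<in> ?K" by (simp_all add: trace_norm_in_subfield)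
    moreover have eq: "x + y + (x + y) ^ p ^ j = (x + x ^ p ^ j) + (y + y ^ p ^ j)"
      by (simp add: frobenius_add ac_simps)
    ultimately show "\<psi> (x + y + (x + y) ^ p ^ j) = \<psi> (x + x ^ p ^ j) * \<psi> (y + y ^ p ^ j)"
      using \<psi>(1) unfolding eq additive_char_on_def by blast
  qed
  moreover have "\<psi> (0 + 0 ^ p ^ j) = 1" using \<psi>(2) p_gt_1 by (simp add: power_0_left)
  moreover have "(\<Sum>u\<in>?K. \<Sum>v\<in>?K. \<psi> (u + v)) = 0" "(\<Sum>t\<in>?K. \<Sum>c\<in>?K. \<psi> t) = 0"
    using \<psi>(1,3) unfolding additive_char_on_def by (simp_all add: sum_distrib_left[symmetric])
  hence "(\<Sum>x\<in>fixed_field ((p ^ j) ^ 2). \<psi> (x + x ^ p ^ j)) = 0"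
    using sum_trace_norm_plus_sum_pairs[OF assms(1), of "\<lambda>t c. \<psi> t"] by simp
  ultimately show ?thesis unfolding nontrivial_additive_char_def by simp
qed


subsection \<open>Gauss periods in the semiprimitive case\<close>

lemma kth_powers_in_square_iff_norm:
  assumes "k > 0" "k dvd Q - 1"
  shows "(z::'a) \<in> kth_powers_in k (Q ^ 2) \<longleftrightarrow> z ^ (Q + 1) \<in> kth_powers_in k Q"
proof -
  obtain r where r: "Q - 1 = k * r" using assms(2) by blast
  have rd: "(Q - 1) div k = r" "(Q ^ 2 - 1) div k = (Q + 1) * r"
    using assms(1) unfolding square_diff_1 r by simp_all
  show ?thesis unfolding kth_powers_in_def rd by (simp only: mem_Collect_eq power_mult)
qed

text \<open>A Davenport--Hasse type relation: the Gauss periods of the quadratic extension, for the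
  lifted character, are determined by those of the base field.\<close>
lemma gauss_period_trace:
  fixes \<psi> :: "'a \<Rightarrow> complex"
  assumes j: "2 * j dvd m" and k: "k > 0" "k dvd p ^ j - 1"
    and \<psi>: "nontrivial_additive_char (fixed_field (p ^ j)) \<psi>"
    and a: "a \<in> fixed_field ((p ^ j) ^ 2)" "a \<noteq> 0"
  defines "Q \<equiv> p ^ j"
  shows "gauss_period (\<lambda>x. \<psi> (x + x ^ Q)) (kth_powers_in k (Q ^ 2)) a
           = - (\<Sum>u\<in>fixed_field Q - {0}. \<psi> u * gauss_period \<psi> (kth_powers_in k Q) (a ^ (Q + 1) / u))"
proof -
  let ?K = "fixed_field Q :: 'a set" and ?SK = "kth_powers_in k Q :: 'a set"
  define b where "b = a ^ (Q + 1)"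
  define F where "F t c = (if c / b \<in> ?SK then \<psi> t else 0)" for t c
  have Q2: "Q \<ge> 2" "Q ^ 2 \<ge> 2" unfolding Q_def
    using power_p_ge_2_of_dvd[OF dvd_mult_right[OF j]] power_p_ge_2_of_dvd[OF j]
    by (simp_all add: power_mult mult.commute)
  have kQ: "k dvd Q - 1" "k dvd Q ^ 2 - 1" using k(2) unfolding square_diff_1 Q_def by simp_all
  have b: "b \<in> ?K" "b \<noteq> 0"
    using trace_norm_in_subfield(2)[OF a(1)] a(2) unfolding b_def Q_def by (simp_all add: mult.commute)
  have \<psi>': "additive_char_on ?K \<psi>" "(\<Sum>t\<in>?K. \<psi> t) = 0"
    using \<psi> unfolding nontrivial_additive_char_def Q_def by blast+
  have "v / a \<in> kth_powers_in k (Q ^ 2) \<longleftrightarrow> (v * v ^ Q) / b \<in> ?SK" for v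
    unfolding kth_powers_in_square_iff_norm[OF k(1) kQ(1)] b_def by (simp add: power_divide mult.commute)
  hence "gauss_period (\<lambda>x. \<psi> (x + x ^ Q)) (kth_powers_in k (Q ^ 2)) a
      = (\<Sum>v\<in>fixed_field (Q ^ 2). F (v + v ^ Q) (v * v ^ Q))"
    unfolding F_def using gauss_period_kth_powers_in[OF kQ(2) Q2(2) a[folded Q_def]] by simp
  also have "\<dots> = - (\<Sum>u\<in>?K. \<Sum>v\<in>?K. F (u + v) (u * v))"
  proof -
    have "(\<Sum>t\<in>?K. F t c) = 0" for c
      unfolding F_def using \<psi>'(2) by (cases "c / b \<in> ?SK") simp_all
    hence "(\<Sum>t\<in>?K. \<Sum>c\<in>?K. F t c) = 0" by (subst sum.swap) simp
    thus ?thesis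
      using sum_trace_norm_plus_sum_pairs[OF j, of F] unfolding Q_def by (simp add: eq_neg_iff_add_eq_0)
  qed
  also have "(\<Sum>u\<in>?K. \<Sum>v\<in>?K. F (u + v) (u * v)) = (\<Sum>u\<in>?K - {0}. \<psi> u * gauss_period \<psi> ?SK (b / u))"
    unfolding F_def by (rule sum_pairs_gauss_period[OF kQ(1) Q2(1) \<psi>'(1) b])
  finally show ?thesis unfolding b_def .
qed

lemma gauss_period_quadratic_step:
  fixes \<psi> :: "'a \<Rightarrow> complex"
  assumes j: "2 * j dvd m" and k: "k > 0" "k dvd p ^ j - 1"
    and \<psi>: "nontrivial_additive_char (fixed_field (p ^ j)) \<psi>"
    and w: "w \<in> fixed_field (p ^ j)" "w \<noteq> 0" and periods: "two_valued_gauss_periods k \<psi> (p ^ j) w D"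
  defines "Q \<equiv> p ^ j"
  shows "two_valued_gauss_periods k (\<lambda>x. \<psi> (x + x ^ Q)) (Q ^ 2) w (- (D ^ 2))"
  unfolding two_valued_gauss_periods_def
proof (intro ballI)
  let ?K = "fixed_field Q :: 'a set" and ?SK = "kth_powers_in k Q :: 'a set"
  fix a :: 'a assume "a \<in> fixed_field (Q ^ 2) - {0}"
  hence a: "a \<in> fixed_field ((p ^ j) ^ 2)" "a \<noteq> 0" unfolding Q_def by auto
  define b where "b = a ^ (Q + 1)"
  have Q2: "Q \<ge> 2" unfolding Q_def using power_p_ge_2_of_dvd[OF dvd_mult_right[OF j]] .
  have b: "b \<in> ?K" "b \<noteq> 0"
    using trace_norm_in_subfield(2)[OF a(1)] a(2) unfolding b_def Q_def by (simp_all add: mult.commute)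
  have bw: "b / w \<in> ?K" "b / w \<noteq> 0" using b w fixed_field_divide unfolding Q_def by auto
  have periods: "gauss_period \<psi> ?SK c = (-1 - D) / of_nat k + (if c / w \<in> ?SK then D else 0)"
    if "c \<in> ?K" "c \<noteq> 0" for c
    using periods that unfolding two_valued_gauss_periods_def Q_def by blast
  have sum_nonzero: "(\<Sum>u\<in>?K - {0}. \<psi> u) = -1"
    using sum_nonzero_additive_char_mult[OF \<psi> _ fixed_field_1] p_gt_1 unfolding Q_def by simp
  have "(a / w) ^ (Q + 1) = b / w / w"
    using w(1) unfolding b_def Q_def fixed_field_def by (simp add: power_divide)
  hence "a / w \<in> kth_powers_in k (Q ^ 2) \<longleftrightarrow> b / w / w \<in> ?SK"
    using kth_powers_in_square_iff_norm[OF k(1) k(2)[folded Q_def]] by simp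
  hence twisted: "(\<Sum>u\<in>?K - {0}. if b / w / u \<in> ?SK then \<psi> u else 0)
      = (-1 - D) / of_nat k + (if a / w \<in> kth_powers_in k (Q ^ 2) then D else 0)"
    using gauss_period_eq_sum_inverse_in[OF k(2)[folded Q_def] Q2 bw] periods[OF bw] by simp
  have "gauss_period (\<lambda>x. \<psi> (x + x ^ Q)) (kth_powers_in k (Q ^ 2)) a
      = - (\<Sum>u\<in>?K - {0}. \<psi> u * gauss_period \<psi> ?SK (b / u))"
    using gauss_period_trace[OF j k \<psi> a] unfolding b_def Q_def .
  also have "\<dots> = - (\<Sum>u\<in>?K - {0}. (-1 - D) / of_nat k * \<psi> u + D * (if b / w / u \<in> ?SK then \<psi> u else 0))"
  proof (intro arg_cong[where f = uminus] sum.cong refl)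
    fix u assume "u \<in> ?K - {0}"
    hence "b / u \<in> ?K" "b / u \<noteq> 0" using b fixed_field_divide by auto
    from periods[OF this] show "\<psi> u * gauss_period \<psi> ?SK (b / u)
        = (-1 - D) / of_nat k * \<psi> u + D * (if b / w / u \<in> ?SK then \<psi> u else 0)"
      by (simp add: algebra_simps)
  qed
  also have "\<dots> = - ((-1 - D) / of_nat k * (\<Sum>u\<in>?K - {0}. \<psi> u)
      + D * (\<Sum>u\<in>?K - {0}. if b / w / u \<in> ?SK then \<psi> u else 0))"
    by (simp only: sum.distrib sum_distrib_left)
  also have "\<dots> = (-1 - - (D ^ 2)) / of_nat k + (if a / w \<in> kth_powers_in k (Q ^ 2) then - (D ^ 2) else 0)"
    unfolding sum_nonzero twisted using k(1) by (simp add: field_simps power2_eq_square)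
  finally show "gauss_period (\<lambda>x. \<psi> (x + x ^ Q)) (kth_powers_in k (Q ^ 2)) a
      = (-1 - - (D ^ 2)) / of_nat k + (if a / w \<in> kth_powers_in k (Q ^ 2) then - (D ^ 2) else 0)" .
qed

lemma trace_kernel:
  assumes "2 * j dvd m"
  obtains z0 :: 'a where "z0 \<in> fixed_field ((p ^ j) ^ 2)" "z0 \<noteq> 0"
    "{y \<in> fixed_field ((p ^ j) ^ 2). y \<noteq> 0 \<and> y + y ^ p ^ j = 0} = (\<lambda>c. c * z0) ` (fixed_field (p ^ j) - {0})"
proof -
  let ?K = "fixed_field (p ^ j) :: 'a set" and ?L = "fixed_field ((p ^ j) ^ 2) :: 'a set"
  let ?Tr = "\<lambda>x::'a. x + x ^ p ^ j"
  have Q2: "p ^ j \<ge> 2" using power_p_ge_2_of_dvd[OF dvd_mult_right[OF assms]] .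
  have "\<not> inj_on ?Tr ?L"
  proof
    assume "inj_on ?Tr ?L"
    hence "card ?L \<le> card ?K" using trace_norm_in_subfield(1) by (intro card_inj_on_le) auto
    hence "p ^ j * p ^ j \<le> p ^ j"
      using card_fixed_field_square[OF assms] card_fixed_field[OF dvd_mult_right[OF assms]]
      by (simp add: power2_eq_square)
    thus False using Q2 p_gt_1 mult_le_mono1[of 2 "p ^ j" "p ^ j"] by simp
  qed
  then obtain x y where xy: "x \<in> ?L" "y \<in> ?L" "x \<noteq> y" "?Tr x = ?Tr y" unfolding inj_on_def by blast
  define z0 where "z0 = x - y"
  have z0: "z0 \<in> ?L" "z0 \<noteq> 0" "z0 ^ p ^ j = - z0"
    using xy fixed_field_diff[of x "2 * j" y] unfolding z0_def
    by (auto simp: power_mult frobenius_diff algebra_simps eq_neg_iff_add_eq_0)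
  have "{y \<in> ?L. y \<noteq> 0 \<and> ?Tr y = 0} = (\<lambda>c. c * z0) ` (?K - {0})"
  proof safe
    fix y assume y: "y \<in> ?L" "y \<noteq> 0" "?Tr y = 0"
    hence "y ^ p ^ j = - y" by (simp add: eq_neg_iff_add_eq_0 add.commute)
    hence "(y / z0) ^ p ^ j = y / z0" using z0(3) by (simp add: power_divide)
    hence "y / z0 \<in> ?K - {0}" using y(2) z0(2) unfolding fixed_field_def by simp
    moreover have "y = (y / z0) * z0" using z0(2) by simp
    ultimately show "y \<in> (\<lambda>c. c * z0) ` (?K - {0})" by blast
  next
    fix c assume c: "c \<in> ?K" "c \<noteq> 0"
    thus "c * z0 \<in> ?L" using fixed_field_subset_square z0(1) fixed_field_mult by blast
    show "c * z0 + (c * z0) ^ p ^ j = 0"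
      using c(1) z0(3) unfolding fixed_field_def by (simp add: power_mult_distrib)
  qed (use z0(2) in auto)
  thus ?thesis by (rule that[OF z0(1,2)])
qed

text \<open>Averaging the Gauss period over the scalings by \<open>F_Q\<^sup>*\<close>, which commute with the trace.\<close>
lemma gauss_period_mean_scalings:
  fixes \<psi> :: "'a \<Rightarrow> complex"
  assumes j: "2 * j dvd m" and \<psi>: "nontrivial_additive_char (fixed_field (p ^ j)) \<psi>"
    and S: "S \<subseteq> fixed_field ((p ^ j) ^ 2)"
      "\<And>c x. c \<in> fixed_field (p ^ j) \<Longrightarrow> c \<noteq> 0 \<Longrightarrow> x \<in> S \<Longrightarrow> c * x \<in> S"
    and a: "a \<in> fixed_field ((p ^ j) ^ 2)"
  defines "Q \<equiv> p ^ j"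
  shows "of_nat (Q - 1) * gauss_period (\<lambda>x. \<psi> (x + x ^ Q)) S a
           = of_nat Q * of_nat (card {x\<in>S. a * x + (a * x) ^ Q = 0}) - of_nat (card S)"
proof -
  let ?K = "fixed_field Q :: 'a set" and ?Tr = "\<lambda>x::'a. x + x ^ Q"
  let ?\<eta> = "gauss_period (\<lambda>x. \<psi> (?Tr x)) S a"
  have Q2: "Q \<ge> 2" unfolding Q_def using power_p_ge_2_of_dvd[OF dvd_mult_right[OF j]] .
  have cK: "card ?K = Q" unfolding Q_def using j by (intro card_fixed_field) (rule dvd_mult_right)
  have K0: "0 \<in> ?K" by (rule fixed_field_0) (use Q2 in simp)
  have Tr_mult: "?Tr (c * y) = c * ?Tr y" if "c \<in> ?K" for c y
    using that unfolding fixed_field_def by (simp add: power_mult_distrib algebra_simps)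
  have TrK: "?Tr (a * x) \<in> ?K" if "x \<in> S" for x
    using trace_norm_in_subfield(1) fixed_field_mult[OF a] S(1) that unfolding Q_def by blast
  have scaled: "(\<Sum>x\<in>S. \<psi> (c * ?Tr (a * x))) = ?\<eta>" if c: "c \<in> ?K - {0}" for c
  proof -
    have "(\<Sum>x\<in>S. \<psi> (?Tr (a * (c * x)))) = ?\<eta>"
      unfolding gauss_period_def
    proof (rule sum.reindex_bij_witness[of _ "\<lambda>x. x / c" "\<lambda>x. c * x"])
      fix x assume "x \<in> S"
      thus "c * x \<in> S" "x / c \<in> S"
        using S(2)[of c x] S(2)[of "inverse c" x] c fixed_field_inverse unfolding Q_def
        by (auto simp: field_simps)
    qed (use c in auto)
    moreover have "?Tr (a * (c * x)) = c * ?Tr (a * x)" for x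
      using Tr_mult[of c "a * x"] c by (metis DiffD1 mult.left_commute)
    ultimately show ?thesis by simp
  qed
  have "of_nat (Q - 1) * ?\<eta> = (\<Sum>c\<in>?K - {0}. \<Sum>x\<in>S. \<psi> (c * ?Tr (a * x)))"
    using scaled cK K0 by (simp add: card_Diff_singleton)
  also have "\<dots> = (\<Sum>x\<in>S. \<Sum>c\<in>?K - {0}. \<psi> (c * ?Tr (a * x)))" by (rule sum.swap)
  also have "\<dots> = (\<Sum>x\<in>S. (if ?Tr (a * x) = 0 then of_nat Q else 0) - 1)"
    using sum_nonzero_additive_char_mult[OF \<psi>[folded Q_def] _ TrK] Q2 cK
    by (intro sum.cong refl) (simp add: of_nat_diff)
  also have "\<dots> = of_nat Q * of_nat (card {x\<in>S. ?Tr (a * x) = 0}) - of_nat (card S)"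
    by (simp add: sum_subtractf sum.If_cases Int_def)
  finally show ?thesis .
qed

text \<open>For a subgroup \<open>S\<close> of \<open>F_{Q^2}\<^sup>*\<close> containing \<open>F_Q\<^sup>*\<close>, the elements \<open>x \<in> S\<close> with
  \<open>Tr(a x) = 0\<close> form the coset \<open>F_Q\<^sup>* z0 / a\<close> or nothing, according as \<open>z0 / a \<in> S\<close>.\<close>
lemma card_trace_zero_subgroup:
  fixes z0 a :: 'a and S :: "'a set"
  assumes j: "2 * j dvd m"
    and z0: "z0 \<noteq> 0" "{y \<in> fixed_field ((p ^ j) ^ 2). y \<noteq> 0 \<and> y + y ^ p ^ j = 0}
                        = (\<lambda>c. c * z0) ` (fixed_field (p ^ j) - {0})"
    and S: "S \<subseteq> fixed_field ((p ^ j) ^ 2) - {0}" "fixed_field (p ^ j) - {0} \<subseteq> S"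
      "\<And>x y. x \<in> S \<Longrightarrow> y \<in> S \<Longrightarrow> x * y \<in> S" "\<And>x y. x \<in> S \<Longrightarrow> y \<in> S \<Longrightarrow> x / y \<in> S"
    and a: "a \<in> fixed_field ((p ^ j) ^ 2)" "a \<noteq> 0"
  defines "Q \<equiv> p ^ j"
  shows "card {x\<in>S. a * x + (a * x) ^ Q = 0} = (if z0 / a \<in> S then Q - 1 else 0)"
proof -
  let ?K = "fixed_field Q :: 'a set" and ?L = "fixed_field (Q ^ 2) :: 'a set"
  have "{x\<in>S. a * x + (a * x) ^ Q = 0} = (if z0 / a \<in> S then (\<lambda>c. c * (z0 / a)) ` (?K - {0}) else {})"
  proof (rule Set.set_eqI, rule iffI)
    fix x assume x: "x \<in> {x\<in>S. a * x + (a * x) ^ Q = 0}"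
    hence "a * x \<in> ?L" "a * x \<noteq> 0" using S(1) a fixed_field_mult unfolding Q_def by auto
    then obtain c where c: "c \<in> ?K - {0}" "a * x = c * z0" using x z0(2) unfolding Q_def by blast
    hence "z0 / a = x / c" using a(2) c z0(1) by (auto simp: field_simps)
    hence "z0 / a \<in> S" using S(2,4) x c unfolding Q_def by auto
    moreover have "x = c * (z0 / a)" using c(2) a(2) by (simp add: field_simps)
    ultimately show "x \<in> (if z0 / a \<in> S then (\<lambda>c. c * (z0 / a)) ` (?K - {0}) else {})"
      using c(1) by auto
  next
    fix x assume "x \<in> (if z0 / a \<in> S then (\<lambda>c. c * (z0 / a)) ` (?K - {0}) else {})"
    then obtain c where c: "c \<in> ?K - {0}" "x = c * (z0 / a)" "z0 / a \<in> S"
      by (auto split: if_splits)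
    have "c * z0 + (c * z0) ^ Q = 0" using z0(2) c(1) unfolding Q_def by blast
    moreover have "a * x = c * z0" using c(2) a(2) by simp
    moreover have "x \<in> S" using S(2,3) c unfolding Q_def by blast
    ultimately show "x \<in> {x\<in>S. a * x + (a * x) ^ Q = 0}" by simp
  qed
  moreover have "inj_on (\<lambda>c. c * (z0 / a)) (?K - {0})" using z0(1) a(2) by (auto simp: inj_on_def)
  hence "card ((\<lambda>c. c * (z0 / a)) ` (?K - {0})) = Q - 1"
    using card_fixed_field[OF dvd_mult_right[OF j]] fixed_field_0[where 'a='a, of Q] p_gt_1
    by (simp add: card_image card_Diff_singleton Q_def)
  ultimately show ?thesis by simp
qed

lemma kth_powers_in_square_of_dvd_plus_1:
  assumes j: "2 * j dvd m" and k: "k > 0" "k dvd p ^ j + 1"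
  defines "Q \<equiv> p ^ j"
  shows subfield_units_subset_kth_powers_in: "fixed_field Q - {0} \<subseteq> (kth_powers_in k (Q ^ 2) :: 'a set)"
    and card_kth_powers_in_square: "card (kth_powers_in k (Q ^ 2) :: 'a set) = (Q - 1) * ((Q + 1) div k)"
proof -
  obtain s where s: "Q + 1 = k * s" using k(2) unfolding Q_def by blast
  have Q2: "Q \<ge> 2" unfolding Q_def using power_p_ge_2_of_dvd[OF dvd_mult_right[OF j]] .
  have dL: "(Q ^ 2 - 1) div k = (Q - 1) * s" unfolding square_diff_1 s using k(1) by simp
  show "fixed_field Q - {0} \<subseteq> (kth_powers_in k (Q ^ 2) :: 'a set)"
  proof
    fix c :: 'a assume c: "c \<in> fixed_field Q - {0}"
    have "c ^ (Q - 1) * c = c ^ (Q - 1 + 1)" by simp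
    also have "\<dots> = c" using c Q2 unfolding fixed_field_def by simp
    finally have "c ^ (Q - 1) = 1" using c by simp
    thus "c \<in> kth_powers_in k (Q ^ 2)" unfolding kth_powers_in_def dL by (simp add: power_mult)
  qed
  have "(Q - 1) * s dvd Q ^ 2 - 1" unfolding square_diff_1 s by simp
  moreover have "Q ^ 2 - 1 dvd q - 1"
    using power_diff_1_dvd[OF j, of p] unfolding Q_def by (simp add: power_mult mult.commute)
  ultimately have "(Q - 1) * s dvd q - 1" by (rule dvd_trans)
  thus "card (kth_powers_in k (Q ^ 2) :: 'a set) = (Q - 1) * ((Q + 1) div k)"
    unfolding kth_powers_in_def dL s using k(1) by (simp add: card_roots_of_unity)
qed

lemma gauss_period_base:
  fixes \<psi> :: "'a \<Rightarrow> complex"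
  assumes j: "2 * j dvd m" and k: "k > 0" "k dvd p ^ j + 1"
    and \<psi>: "nontrivial_additive_char (fixed_field (p ^ j)) \<psi>"
  defines "Q \<equiv> p ^ j"
  obtains w where "w \<in> fixed_field (Q ^ 2)" "w \<noteq> 0"
    "two_valued_gauss_periods k (\<lambda>x. \<psi> (x + x ^ Q)) (Q ^ 2) w (of_nat Q)"
proof -
  let ?K = "fixed_field Q :: 'a set" and ?L = "fixed_field (Q ^ 2) :: 'a set"
  let ?SL = "kth_powers_in k (Q ^ 2) :: 'a set"
  obtain z0 where z0: "z0 \<in> ?L" "z0 \<noteq> 0"
      "{y \<in> ?L. y \<noteq> 0 \<and> y + y ^ Q = 0} = (\<lambda>c. c * z0) ` (?K - {0})"
    by (rule trace_kernel[OF j, folded Q_def])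
  obtain s where s: "Q + 1 = k * s" using k(2) unfolding Q_def by blast
  have Q2: "Q \<ge> 2" unfolding Q_def using power_p_ge_2_of_dvd[OF dvd_mult_right[OF j]] .
  have kL: "k dvd Q ^ 2 - 1" unfolding square_diff_1 s by simp
  have Q22: "Q ^ 2 \<ge> 2" using Q2 mult_le_mono[of 1 Q 2 Q] by (simp add: power2_eq_square)
  have SL: "?SL \<subseteq> ?L - {0}"
    using kth_powers_in_subset[where 'a='a, OF kL Q22] kth_powers_in_nonzero[where 'a='a, OF kL Q22] by blast
  note K_SL = subfield_units_subset_kth_powers_in[OF j k, folded Q_def]
  have card_SL: "card ?SL = (Q - 1) * s"
    using card_kth_powers_in_square[OF j k, folded Q_def] s k(1) by simp
  have "gauss_period (\<lambda>x. \<psi> (x + x ^ Q)) ?SL a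
      = (-1 - of_nat Q) / of_nat k + (if a / z0 \<in> ?SL then of_nat Q else 0)"
    if a: "a \<in> ?L" "a \<noteq> 0" for a
  proof -
    let ?\<eta> = "gauss_period (\<lambda>x. \<psi> (x + x ^ Q)) ?SL a"
    have "of_nat (Q - 1) * ?\<eta> = of_nat Q * of_nat (card {x\<in>?SL. a * x + (a * x) ^ Q = 0}) - of_nat (card ?SL)"
      by (rule gauss_period_mean_scalings[where j = j, folded Q_def, OF j \<psi>[folded Q_def] _ _ a(1)])
         (use SL K_SL kth_powers_in_mult in blast)+
    also have "card {x\<in>?SL. a * x + (a * x) ^ Q = 0} = (if z0 / a \<in> ?SL then Q - 1 else 0)"
      by (rule card_trace_zero_subgroup[where j = j, folded Q_def, OF j z0(2,3) SL K_SL kth_powers_in_mult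
            kth_powers_in_divide a])
    finally have "of_nat (Q - 1) * ?\<eta> = of_nat (Q - 1) * ((if z0 / a \<in> ?SL then of_nat Q else 0) - of_nat s)"
      unfolding card_SL of_nat_mult by (cases "z0 / a \<in> ?SL") (simp_all add: algebra_simps)
    moreover have "(of_nat (Q - 1) :: complex) \<noteq> 0" using Q2 by simp
    ultimately have \<eta>: "?\<eta> = (if z0 / a \<in> ?SL then of_nat Q else 0) - of_nat s" by simp
    have "(of_nat k :: complex) * of_nat s = of_nat Q + 1"
      using s by (metis of_nat_1 of_nat_add of_nat_mult)
    hence "(of_nat s :: complex) = (of_nat Q + 1) / of_nat k" using k(1) by (simp add: field_simps)
    moreover have "a / z0 \<in> ?SL \<longleftrightarrow> z0 / a \<in> ?SL"
      using kth_powers_in_inverse_iff[of "z0 / a" k "Q ^ 2"] by simp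
    ultimately show ?thesis unfolding \<eta> by (simp add: diff_divide_distrib add_divide_distrib)
  qed
  hence "two_valued_gauss_periods k (\<lambda>x. \<psi> (x + x ^ Q)) (Q ^ 2) z0 (of_nat Q)"
    unfolding two_valued_gauss_periods_def by blast
  thus ?thesis by (rule that[OF z0(1,2)])
qed

lemma gauss_periods_tower:
  assumes j: "j > 0" and k: "k > 0" "k dvd p ^ j + 1"
  shows "j * 2 ^ (e + 1) dvd m \<Longrightarrow> \<exists>(\<psi> :: 'a \<Rightarrow> complex) w.
     nontrivial_additive_char (fixed_field (p ^ (j * 2 ^ (e + 1)))) \<psi> \<and>
     w \<in> fixed_field (p ^ (j * 2 ^ (e + 1))) \<and> w \<noteq> 0 \<and>
     two_valued_gauss_periods k \<psi> (p ^ (j * 2 ^ (e + 1))) w ((if e = 0 then 1 else -1) * of_nat (p ^ (j * 2 ^ e)))"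
proof (induction e)
  case 0
  hence m2: "2 * j dvd m" by (simp add: mult.commute)
  note \<psi> = nontrivial_additive_char_subfield[OF dvd_mult_right[OF m2]]
  obtain w where "w \<in> fixed_field ((p ^ j) ^ 2)" "w \<noteq> 0"
    "two_valued_gauss_periods k (\<lambda>x. prime_field_char (trace_to_prime_field j (x + x ^ p ^ j)))
       ((p ^ j) ^ 2) w (of_nat (p ^ j))"
    by (rule gauss_period_base[OF m2 k \<psi>])
  moreover have "p ^ (j * 2 ^ (0 + 1)) = (p ^ j) ^ 2" by (simp add: power_mult)
  ultimately show ?case using nontrivial_additive_char_trace[OF m2 \<psi>] by auto
next
  case (Suc e)
  define J where "J = j * 2 ^ (e + 1)"
  define D :: complex where "D = (if e = 0 then 1 else -1) * of_nat (p ^ (j * 2 ^ e))"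
  have J: "2 * J dvd m" using Suc.prems unfolding J_def by (simp add: mult_ac)
  obtain \<psi> :: "'a \<Rightarrow> complex" and w where IH: "nontrivial_additive_char (fixed_field (p ^ J)) \<psi>"
      "w \<in> fixed_field (p ^ J)" "w \<noteq> 0" "two_valued_gauss_periods k \<psi> (p ^ J) w D"
    using Suc.IH[OF dvd_mult_right[OF J, unfolded J_def]] unfolding J_def D_def by blast
  have kJ: "k dvd p ^ J - 1"
    using dvd_plus_1_imp_dvd_power_diff_1[OF k(2), of J] unfolding J_def by simp
  have "p ^ (j * 2 ^ (Suc e + 1)) = (p ^ J) ^ 2"
    unfolding J_def by (simp flip: power_mult add: mult_ac)
  moreover have "(if Suc e = 0 then 1 else -1) * of_nat (p ^ (j * 2 ^ Suc e)) = - (D ^ 2)"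
    unfolding D_def by (simp add: power_mult_distrib power_mult[symmetric] mult_ac flip: of_nat_power)
  ultimately show ?case
    using nontrivial_additive_char_trace[OF J IH(1)] gauss_period_quadratic_step[OF J k(1) kJ IH]
      IH(3) fixed_field_subset_square[of "p ^ J"] IH(2) by auto
qed

end


section \<open>Spectra of Cayley graphs on a finite field\<close>

lemma sum_additive_char_mult:
  fixes \<psi> :: "'a::{field,finite} \<Rightarrow> complex"
  assumes "nontrivial_additive_char UNIV \<psi>"
  shows "(\<Sum>b\<in>UNIV. \<psi> (b * w)) = (if w = 0 then of_nat CARD('a) else 0)"
proof (cases "w = 0")
  case False
  have "(\<Sum>b\<in>UNIV. \<psi> (b * w)) = (\<Sum>b\<in>UNIV. \<psi> b)"
    by (rule sum.reindex_bij_witness[of _ "\<lambda>c. c / w" "\<lambda>c. c * w"]) (use False in auto)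
  thus ?thesis using assms False unfolding nontrivial_additive_char_def by simp
qed (use assms in \<open>simp add: nontrivial_additive_char_def\<close>)

text \<open>The matrix \<open>(\<psi>(b v))\<^sub>v\<^sub>,\<^sub>b\<close> of a nontrivial additive character is invertible by orthogonality.\<close>
lemma det_additive_char_matrix_nonzero:
  fixes \<psi> :: "'a::{field,finite} \<Rightarrow> complex"
  assumes \<psi>: "nontrivial_additive_char UNIV \<psi>"
  shows "det ((\<chi> v b. [:\<psi> (b * v):]) :: ((complex poly, 'a) vec, 'a) vec) \<noteq> 0"
proof -
  let ?M = "(\<chi> v b. [:\<psi> (b * v):]) :: ((complex poly, 'a) vec, 'a) vec"
  let ?M' = "(\<chi> b v. [:\<psi> (- (b * v)):]) :: ((complex poly, 'a) vec, 'a) vec"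
  have add: "\<psi> (x + y) = \<psi> x * \<psi> y" for x y
    using \<psi> unfolding nontrivial_additive_char_def additive_char_on_def by simp
  have "(?M ** ?M') $ u $ v = (if u = v then [:of_nat CARD('a):] else 0)" for u v
  proof -
    have "(?M ** ?M') $ u $ v = [:\<Sum>b\<in>UNIV. \<psi> (b * (u - v)):]"
      unfolding matrix_matrix_mult_def
      by (simp add: sum_to_poly add[symmetric] right_diff_distrib mult.commute)
    thus ?thesis using sum_additive_char_mult[OF \<psi>] by simp
  qed
  hence "?M ** ?M' = (\<chi> i j. if i = j then [:of_nat CARD('a):] else 0)" by (simp add: vec_eq_iff)
  hence "det ?M * det ?M' = (\<Prod>i\<in>(UNIV::'a set). [:of_nat CARD('a):])"
    by (simp add: det_mul[symmetric] det_diagonal)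
  thus ?thesis by auto
qed

text \<open>The character vectors \<open>(\<psi>(b v))\<^sub>v\<close> are common eigenvectors of all Cayley graphs of \<open>(F, +)\<close>.\<close>
lemma char_poly_cayley:
  fixes \<psi> :: "'a::{finite,field} \<Rightarrow> complex" and C :: "'a set"
  assumes \<psi>: "nontrivial_additive_char UNIV \<psi>"
  shows "char_poly_mat ((\<chi> u v. if v - u \<in> C then 1 else 0) :: ((complex, 'a) vec, 'a) vec)
         = (\<Prod>b\<in>UNIV. [:- (\<Sum>d\<in>C. \<psi> (b * d)), 1:])"
proof -
  define A where "A = ((\<chi> u v. if v - u \<in> C then 1 else 0) :: ((complex, 'a) vec, 'a) vec)"
  define \<theta> where "\<theta> b = (\<Sum>d\<in>C. \<psi> (b * d))" for b
  define M where "M = ((\<chi> v b. [:\<psi> (b * v):]) :: ((complex poly, 'a) vec, 'a) vec)"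
  define XA where "XA = ((\<chi> i j. (if i = j then [:0, 1:] else 0) - [:A $ i $ j:]) :: ((complex poly, 'a) vec, 'a) vec)"
  define XD where "XD = ((\<chi> i j. if i = j then [:- \<theta> i, 1:] else 0) :: ((complex poly, 'a) vec, 'a) vec)"
  have add: "\<psi> (x + y) = \<psi> x * \<psi> y" for x y
    using \<psi> unfolding nontrivial_additive_char_def additive_char_on_def by simp
  have row: "(\<Sum>v\<in>UNIV. A $ u $ v * \<psi> (b * v)) = \<psi> (b * u) * \<theta> b" for u b
  proof -
    have "(\<Sum>v\<in>UNIV. A $ u $ v * \<psi> (b * v)) = (\<Sum>v\<in>UNIV. if v - u \<in> C then \<psi> (b * v) else 0)"
      unfolding A_def by (intro sum.cong refl) simp
    also have "\<dots> = (\<Sum>v\<in>{v. v - u \<in> C}. \<psi> (b * v))" by (simp add: sum.If_cases)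
    also have "\<dots> = (\<Sum>d\<in>C. \<psi> (b * (u + d)))"
      by (rule sum.reindex_bij_witness[of _ "\<lambda>d. u + d" "\<lambda>v. v - u"]) auto
    finally show ?thesis unfolding \<theta>_def by (simp add: distrib_left add sum_distrib_left)
  qed
  have "(XA ** M) $ u $ b = (M ** XD) $ u $ b" for u b
  proof -
    have "((if u = v then [:0, 1:] else 0) - [:A $ u $ v:]) * [:\<psi> (b * v):]
        = (if u = v then [:0, 1:] * [:\<psi> (b * v):] else 0) - [:A $ u $ v * \<psi> (b * v):]" for v
      by (cases "u = v") (simp_all add: left_diff_distrib)
    hence "(XA ** M) $ u $ b
        = (\<Sum>v\<in>UNIV. if u = v then [:0, 1:] * [:\<psi> (b * v):] else 0) - (\<Sum>v\<in>UNIV. [:A $ u $ v * \<psi> (b * v):])"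
      unfolding matrix_matrix_mult_def XA_def M_def by (simp add: sum_subtractf)
    also have "\<dots> = [:\<psi> (b * u):] * [:- \<theta> b, 1:]" by (simp add: sum_to_poly row)
    also have "\<dots> = (M ** XD) $ u $ b"
      unfolding matrix_matrix_mult_def M_def XD_def by (simp add: if_distrib cong: if_cong)
    finally show ?thesis .
  qed
  hence "XA ** M = M ** XD" by (simp add: vec_eq_iff)
  hence "det XA * det M = det M * det XD" by (metis det_mul)
  hence "det XA = det XD" using det_additive_char_matrix_nonzero[OF \<psi>] unfolding M_def by simp
  also have "det XD = (\<Prod>b\<in>UNIV. [:- \<theta> b, 1:])" unfolding XD_def by (subst det_diagonal) simp_all
  finally show ?thesis unfolding char_poly_mat_def XA_def A_def \<theta>_def by simp
qed

lemma adj_spectrum_cayley: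
  fixes \<psi> :: "'a::{finite,field} \<Rightarrow> complex" and C :: "'a set"
  assumes "nontrivial_additive_char UNIV \<psi>"
  shows "adj_spectrum ((\<chi> u v. if v - u \<in> C then 1 else 0) :: ((complex, 'a) vec, 'a) vec)
         = (\<Sum>b\<in>UNIV. {# \<Sum>d\<in>C. \<psi> (b * d) #})"
  unfolding adj_spectrum_def char_poly_cayley[OF assms] by (subst proots_prod) simp_all

lemma adj_spectrum_cayley_two_values:
  fixes \<psi> :: "'a::{finite,field} \<Rightarrow> complex" and C R :: "'a set"
  assumes \<psi>: "nontrivial_additive_char UNIV \<psi>" and w: "w \<noteq> 0" and R: "0 \<notin> R"
    and eigenvalues: "\<And>b. b \<noteq> 0 \<Longrightarrow> (\<Sum>d\<in>C. \<psi> (b * d)) = (if b / w \<in> R then \<alpha> else \<beta>)"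
  shows "adj_spectrum ((\<chi> u v. if v - u \<in> C then 1 else 0) :: ((complex, 'a) vec, 'a) vec)
         = {# of_nat (card C) #} + replicate_mset (card R) \<alpha> + replicate_mset (CARD('a) - 1 - card R) \<beta>"
proof -
  define W where "W = (\<lambda>x. w * x) ` R"
  define V where "V = UNIV - {0} - W"
  have "b \<in> W \<longleftrightarrow> b \<noteq> 0 \<and> b / w \<in> R" for b
  proof
    assume "b \<in> W"
    then obtain x where "x \<in> R" "b = w * x" unfolding W_def by auto
    thus "b \<noteq> 0 \<and> b / w \<in> R" using w R by auto
  next
    assume "b \<noteq> 0 \<and> b / w \<in> R"
    moreover have "b = w * (b / w)" using w by simp
    ultimately show "b \<in> W" unfolding W_def by blast
  qed
  hence W: "W = {b. b \<noteq> 0 \<and> b / w \<in> R}" by blast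
  have UNIV_eq: "UNIV = insert 0 (W \<union> V)" and disj: "0 \<notin> W \<union> V" "W \<inter> V = {}"
    unfolding V_def W by auto
  have card_W: "card W = card R" unfolding W_def using w by (intro card_image) (auto simp: inj_on_def)
  have "W \<subseteq> UNIV - {0}" using W by auto
  hence card_V: "card V = CARD('a) - 1 - card R"
    unfolding V_def using card_W by (simp add: card_Diff_subset card_Diff_singleton)
  have const: "(\<Sum>b\<in>B. {# f b #}) = replicate_mset (card B) c" if "\<And>b. b \<in> B \<Longrightarrow> f b = c" for B f c
    using that by (induction B rule: infinite_finite_induct) auto
  have "adj_spectrum ((\<chi> u v. if v - u \<in> C then 1 else 0) :: ((complex, 'a) vec, 'a) vec)
      = {# \<Sum>d\<in>C. \<psi> (0 * d) #} + (\<Sum>b\<in>W. {# \<Sum>d\<in>C. \<psi> (b * d) #}) + (\<Sum>b\<in>V. {# \<Sum>d\<in>C. \<psi> (b * d) #})"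
    unfolding adj_spectrum_cayley[OF \<psi>] UNIV_eq using disj by (simp add: sum.union_disjoint add.assoc)
  also have "(\<Sum>b\<in>W. {# \<Sum>d\<in>C. \<psi> (b * d) #}) = replicate_mset (card W) \<alpha>"
    using eigenvalues W by (intro const) simp
  also have "(\<Sum>b\<in>V. {# \<Sum>d\<in>C. \<psi> (b * d) #}) = replicate_mset (card V) \<beta>"
    using eigenvalues W unfolding V_def by (intro const) auto
  also have "(\<Sum>d\<in>C. \<psi> (0 * d)) = of_nat (card C)"
    using \<psi> unfolding nontrivial_additive_char_def by simp
  finally show ?thesis unfolding card_W card_V .
qed


lemma sum_additive_char_complement:
  fixes \<psi> :: "'a::{field,finite} \<Rightarrow> complex" and R :: "'a set"
  assumes "nontrivial_additive_char UNIV \<psi>" "0 \<notin> R" "b \<noteq> 0"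
  shows "(\<Sum>d\<in>UNIV - {0} - R. \<psi> (b * d)) = -1 - (\<Sum>d\<in>R. \<psi> (b * d))"
proof -
  have "R \<subseteq> UNIV - {0}" using assms(2) by blast
  hence "(\<Sum>d\<in>UNIV - {0} - R. \<psi> (b * d)) = (\<Sum>d\<in>UNIV - {0}. \<psi> (b * d)) - (\<Sum>d\<in>R. \<psi> (b * d))"
    by (simp add: sum_diff)
  also have "(\<Sum>d\<in>UNIV - {0}. \<psi> (b * d)) = (\<Sum>d\<in>UNIV. \<psi> (d * b)) - \<psi> 0"
    by (simp add: sum_diff1 mult.commute)
  finally show ?thesis using assms sum_additive_char_mult[OF assms(1), of b]
    unfolding nontrivial_additive_char_def by simp
qed


section \<open>Generalized Paley graphs\<close>

lemma semiprimitive_gauss_periods: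
  fixes p m k :: nat
  assumes p: "prime p" and card: "CARD('a::{field,finite}) = p ^ m"
    and m: "even m" and sp: "semiprimitive_pair p m k"
  defines "lam1 \<equiv> (of_int (sp_sigma p m k) * (of_nat k - 1) * of_nat p ^ (m div 2) - 1) / of_nat k :: complex"
    and "lam2 \<equiv> - (of_int (sp_sigma p m k) * of_nat p ^ (m div 2) + 1) / of_nat k :: complex"
  obtains \<psi> :: "'a::{field,finite} \<Rightarrow> complex" and w where "nontrivial_additive_char UNIV \<psi>" "w \<noteq> 0"
    "\<And>a. a \<noteq> 0 \<Longrightarrow> (\<Sum>d\<in>kth_powers k. \<psi> (a * d)) = (if a / w \<in> kth_powers k then lam1 else lam2)"
proof -
  interpret prime_power_field p m "TYPE('a)" by unfold_locales (use p card in auto)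
  obtain j e where je: "j > 0" "k dvd p ^ j + 1" "m = j * 2 ^ (e + 1)"
    "sp_sigma p m k = (if e = 0 then 1 else -1)"
    using semiprimitive_pair_decomposition[OF p m_pos m sp] .
  have k: "k > 0" using je(2) by (auto intro: Nat.gr0I)
  have "k dvd q - 1" using sp unfolding semiprimitive_pair_def by blast
  hence R: "kth_powers_in k q = (kth_powers k :: 'a set)"
    unfolding kth_powers_in_def by (simp add: kth_powers_eq_roots)
  have UNIV: "fixed_field q = (UNIV :: 'a set)" unfolding fixed_field_def using power_q by auto
  have jm: "j * 2 ^ (e + 1) dvd m" and pq: "p ^ (j * 2 ^ (e + 1)) = q" using je(3) by simp_all
  have D: "(if e = 0 then 1 else -1) * of_nat (p ^ (j * 2 ^ e)) = of_int (sp_sigma p m k) * of_nat p ^ (m div 2)"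
    using je(3,4) by simp
  obtain \<psi> :: "'a \<Rightarrow> complex" and w where \<psi>: "nontrivial_additive_char UNIV \<psi>" "w \<in> UNIV" "w \<noteq> 0"
      "two_valued_gauss_periods k \<psi> q w (of_int (sp_sigma p m k) * of_nat p ^ (m div 2))"
    using gauss_periods_tower[OF je(1) k je(2) jm, unfolded pq R UNIV D] by (elim exE conjE) (rule that)
  have "(-1 - of_int (sp_sigma p m k) * of_nat p ^ (m div 2)) / of_nat k
         + (if b then of_int (sp_sigma p m k) * of_nat p ^ (m div 2) else 0) = (if b then lam1 else lam2)" for b
    unfolding lam1_def lam2_def using k by (cases b) (simp_all add: field_simps)
  thus ?thesis
    using that \<psi>(1,3,4) unfolding two_valued_gauss_periods_def gauss_period_def R UNIV by simp
qed

lemma eigenvalue_formulas_distinct: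
  fixes \<sigma> :: int and \<omega> k n :: nat
  assumes \<sigma>: "\<sigma> = 1 \<or> \<sigma> = -1" and \<omega>: "\<omega> \<ge> 2" and k: "k \<ge> 2" "k \<noteq> \<omega> + 1"
    and n: "k * n + 1 = \<omega> ^ 2"
  defines "lam1 \<equiv> (of_int \<sigma> * (of_nat k - 1) * of_nat \<omega> - 1) / of_nat k :: complex"
    and "lam2 \<equiv> - (of_int \<sigma> * of_nat \<omega> + 1) / of_nat k :: complex"
  shows "of_nat n \<noteq> lam1 \<and> of_nat n \<noteq> lam2 \<and> lam1 \<noteq> lam2"
proof -
  have k0: "(of_nat k :: complex) \<noteq> 0" using k by simp
  have "k * n + 1 = \<omega> * \<omega>" using n by (simp add: power2_eq_square)
  hence "(of_nat (k * n + 1) :: complex) = of_nat (\<omega> * \<omega>)" by (rule arg_cong)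
  hence "(of_nat k * of_nat n :: complex) + 1 = of_nat \<omega> * of_nat \<omega>" by (simp add: add.commute)
  hence scaled: "of_nat k * of_nat n = (of_int (int \<omega> * int \<omega> - 1) :: complex)"
    "of_nat k * lam1 = (of_int (\<sigma> * (int k - 1) * int \<omega> - 1) :: complex)"
    "of_nat k * lam2 = (of_int (- \<sigma> * int \<omega> - 1) :: complex)"
    using k0 unfolding lam1_def lam2_def by (simp_all add: field_simps)
  have "int \<omega> * int \<omega> \<noteq> \<sigma> * (int k - 1) * int \<omega>"
  proof
    assume "int \<omega> * int \<omega> = \<sigma> * (int k - 1) * int \<omega>"
    hence "int \<omega> = \<sigma> * (int k - 1)" using \<omega> by simp
    thus False using \<sigma> \<omega> k by auto
  qed
  moreover have "int \<omega> * int \<omega> \<noteq> - \<sigma> * int \<omega>"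
  proof
    assume "int \<omega> * int \<omega> = - \<sigma> * int \<omega>"
    hence "(int \<omega> + \<sigma>) * int \<omega> = 0" by (simp add: algebra_simps)
    hence "int \<omega> = - \<sigma>" using \<omega> by simp
    thus False using \<sigma> \<omega> by auto
  qed
  moreover have "\<sigma> * (int k - 1) * int \<omega> \<noteq> - \<sigma> * int \<omega>" using \<sigma> \<omega> k by (auto simp: algebra_simps)
  ultimately show ?thesis
    using arg_cong[of "of_nat n" lam1 "\<lambda>x. of_nat k * x"] arg_cong[of "of_nat n" lam2 "\<lambda>x. of_nat k * x"]
      arg_cong[of lam1 lam2 "\<lambda>x. of_nat k * x"]
    unfolding scaled of_int_eq_iff by auto
qed

lemma semiprimitive_eigenvalues_distinct:
  fixes p m k :: nat
  assumes p: "prime p" and m: "m > 0" "even m" and sp: "semiprimitive_pair p m k"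
  defines "n \<equiv> (p ^ m - 1) div k"
    and "lam1 \<equiv> (of_int (sp_sigma p m k) * (of_nat k - 1) * of_nat p ^ (m div 2) - 1) / of_nat k :: complex"
    and "lam2 \<equiv> - (of_int (sp_sigma p m k) * of_nat p ^ (m div 2) + 1) / of_nat k :: complex"
  shows "of_nat n \<noteq> lam1 \<and> of_nat n \<noteq> lam2 \<and> lam1 \<noteq> lam2"
proof -
  have k: "k \<ge> 2" "k dvd p ^ m - 1" using sp unfolding semiprimitive_pair_def by auto
  have "sp_sigma p m k = 1 \<or> sp_sigma p m k = -1" unfolding sp_sigma_def by (simp add: minus_one_power_iff)
  moreover have \<omega>: "p ^ (m div 2) \<ge> 2" using m prime_gt_1_nat[OF p] one_less_power[of p "m div 2"] by auto
  moreover have "k \<noteq> p ^ (m div 2) + 1" using sp \<omega> unfolding semiprimitive_pair_def by auto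
  moreover have "p ^ m \<ge> 1" using prime_gt_1_nat[OF p] by simp
  hence "k * n + 1 = (p ^ (m div 2)) ^ 2" unfolding n_def using k(2) m(2) by (simp flip: power_mult)
  ultimately show ?thesis using eigenvalue_formulas_distinct[of "sp_sigma p m k" "p ^ (m div 2)" k n] k(1)
    unfolding lam1_def lam2_def by simp
qed

lemma adj_spectra_paley:
  fixes \<psi> :: "'a::{field,finite} \<Rightarrow> complex"
  assumes \<psi>: "nontrivial_additive_char UNIV \<psi>" "w \<noteq> 0"
    and periods: "\<And>a. a \<noteq> 0 \<Longrightarrow> (\<Sum>d\<in>kth_powers k. \<psi> (a * d)) = (if a / w \<in> kth_powers k then \<alpha> else \<beta>)"
    and sizes: "card (kth_powers k :: 'a set) = n" "CARD('a) = k * n + 1"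
  shows "adj_spectrum (paley_adj k :: ((complex, 'a) vec, 'a) vec)
           = {# of_nat n #} + replicate_mset n \<alpha> + replicate_mset ((k - 1) * n) \<beta>"
    and "adj_spectrum (paley_comp_adj k :: ((complex, 'a) vec, 'a) vec)
           = {# of_nat ((k - 1) * n) #} + replicate_mset n (-1 - \<alpha>) + replicate_mset ((k - 1) * n) (-1 - \<beta>)"
proof -
  let ?R = "kth_powers k :: 'a set"
  have R0: "0 \<notin> ?R" unfolding kth_powers_def by auto
  hence "?R \<subseteq> UNIV - {0}" by blast
  hence card_rest: "CARD('a) - 1 - n = (k - 1) * n" "card (UNIV - {0} - ?R) = (k - 1) * n"
    using sizes by (simp_all add: card_Diff_subset diff_mult_distrib)
  have "paley_comp_adj k = ((\<chi> u v. if v - u \<in> UNIV - {0} - ?R then 1 else 0) :: ((complex, 'a) vec, 'a) vec)"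
    unfolding paley_comp_adj_def by simp
  thus "adj_spectrum (paley_adj k :: ((complex, 'a) vec, 'a) vec)
           = {# of_nat n #} + replicate_mset n \<alpha> + replicate_mset ((k - 1) * n) \<beta>"
    "adj_spectrum (paley_comp_adj k :: ((complex, 'a) vec, 'a) vec)
           = {# of_nat ((k - 1) * n) #} + replicate_mset n (-1 - \<alpha>) + replicate_mset ((k - 1) * n) (-1 - \<beta>)"
    unfolding paley_adj_def
    using adj_spectrum_cayley_two_values[OF \<psi> R0 periods] sizes card_rest
      adj_spectrum_cayley_two_values[OF \<psi> R0, of "UNIV - {0} - ?R" "-1 - \<alpha>" "-1 - \<beta>"]
      sum_additive_char_complement[OF \<psi>(1) R0] periods
    by simp_all
qed

theorem theorem3p3:
  fixes p m k :: nat
  assumes "prime p" and "CARD('a::{field,finite}) = p ^ m"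
    and "even m"
    and "semiprimitive_pair p m k"
  defines "n \<equiv> (p ^ m - 1) div k"
    and "lam1 \<equiv> (of_int (sp_sigma p m k) * (of_nat k - 1) * of_nat p ^ (m div 2) - 1) / of_nat k :: complex"
    and "lam2 \<equiv> - (of_int (sp_sigma p m k) * of_nat p ^ (m div 2) + 1) / of_nat k :: complex"
  shows "adj_spectrum (paley_adj k :: ((complex, 'a) vec, 'a) vec)
           = {# of_nat n #} + replicate_mset n lam1 + replicate_mset ((k - 1) * n) lam2
         \<and> adj_spectrum (paley_comp_adj k :: ((complex, 'a) vec, 'a) vec)
           = {# of_nat ((k - 1) * n) #} + replicate_mset n ((of_nat k - 1) * lam2)
             + replicate_mset ((k - 1) * n) (- 1 - lam2)
         \<and> of_nat n \<noteq> lam1 \<and> of_nat n \<noteq> lam2 \<and> lam1 \<noteq> lam2"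
proof -
  interpret prime_power_field p m "TYPE('a)" by unfold_locales (use assms(1,2) in auto)
  obtain \<psi> :: "'a \<Rightarrow> complex" and w where \<psi>: "nontrivial_additive_char UNIV \<psi>" "w \<noteq> 0"
    and periods: "\<And>a. a \<noteq> 0 \<Longrightarrow> (\<Sum>d\<in>kth_powers k. \<psi> (a * d)) = (if a / w \<in> kth_powers k then lam1 else lam2)"
    by (rule semiprimitive_gauss_periods[OF assms(1-4), folded lam1_def lam2_def]) blast
  have k: "k \<ge> 2" "k dvd q - 1" using assms(4) unfolding semiprimitive_pair_def by auto
  have "CARD('a) = k * n + 1" unfolding n_def card_UNIV using k(2) q_gt_1 by simp
  note spectra = adj_spectra_paley[OF \<psi> periods card_kth_powers[OF k(2), folded n_def] this]
  have "-1 - lam1 = (of_nat k - 1) * lam2" unfolding lam1_def lam2_def using k(1) by (simp add: field_simps)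
  thus ?thesis using spectra semiprimitive_eigenvalues_distinct[OF assms(1) m_pos assms(3,4)]
    unfolding n_def lam1_def lam2_def by simp
qed

end
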